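(* Let $K\subseteq\mathbb{R}^d$ be a compact connected set. Then there is a constant $C>0$ such that $\frac{|f(y)-f(x)|}{|y-x|}\le C\|f\|_{C^1(K)}$ for all $f\in C^1(K)$ and all $x\neq y$ in $K$ if and only if $K$ is Whitney regular.
   Context: $C^1(K)$ is the set of $f:K\to\mathbb{R}$ admitting a continuous $df:K\to\mathbb{R}^d$ with $\lim_{y\to x,\,y\in K\setminus\{x\}}\frac{f(y)-f(x)-\langle df(x),y-x\rangle}{|y-x|}=0$ for all $x\in K$, normed by $\|f\|_{C^1(K)}=\|f\|_K+\inf\{\|df\|_K: df \text{ a continuous derivative of } f\}$. $K$ is Whitney regular if there is $C>0$ such that any two points $x,y\in K$ can be joined by a rectifiable path in $K$ of length at most $C|x-y|$ (a rectifiable path is a continuous map $\gamma:[a,b]\to K$ of finite length $\sup\sum_j|\gamma(t_j)-\gamma(t_{j-1})|$). *)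

theory Defs
  imports "HOL-Analysis.Analysis"
begin

text \<open>R^d is modelled by an arbitrary Euclidean space 'a.\<close>

definition is_C1_deriv :: "'a::euclidean_space set \<Rightarrow> ('a \<Rightarrow> real) \<Rightarrow> ('a \<Rightarrow> 'a) \<Rightarrow> bool" where
  "is_C1_deriv K f df \<longleftrightarrow> continuous_on K df \<and>
     (\<forall>x\<in>K. ((\<lambda>y. (f y - f x - inner (df x) (y - x)) / norm (y - x)) \<longlongrightarrow> 0) (at x within K))"

definition C1 :: "'a::euclidean_space set \<Rightarrow> ('a \<Rightarrow> real) set" where
  "C1 K = {f. \<exists>df. is_C1_deriv K f df}"

definition sup_norm_on :: "'a set \<Rightarrow> ('a \<Rightarrow> 'b::real_normed_vector) \<Rightarrow> real" where
  "sup_norm_on K g = (SUP x\<in>K. norm (g x))"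

definition C1_norm :: "'a::euclidean_space set \<Rightarrow> ('a \<Rightarrow> real) \<Rightarrow> real" where
  "C1_norm K f = sup_norm_on K f + Inf {sup_norm_on K df | df. is_C1_deriv K f df}"

definition polygon_lengths :: "real \<Rightarrow> real \<Rightarrow> (real \<Rightarrow> 'a::real_normed_vector) \<Rightarrow> real set" where
  "polygon_lengths a b \<gamma> = {\<Sum>j<n. norm (\<gamma> (t (Suc j)) - \<gamma> (t j)) | t n.
       t 0 = a \<and> t n = b \<and> (\<forall>j<n. t j \<le> t (Suc j))}"

definition path_length_on :: "real \<Rightarrow> real \<Rightarrow> (real \<Rightarrow> 'a::real_normed_vector) \<Rightarrow> real" where
  "path_length_on a b \<gamma> = Sup (polygon_lengths a b \<gamma>)"

definition rectifiable_path_in :: "'a::real_normed_vector set \<Rightarrow> real \<Rightarrow> real \<Rightarrow> (real \<Rightarrow> 'a) \<Rightarrow> bool" where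
  "rectifiable_path_in K a b \<gamma> \<longleftrightarrow> a \<le> b \<and> continuous_on {a..b} \<gamma> \<and> \<gamma> ` {a..b} \<subseteq> K \<and>
     bdd_above (polygon_lengths a b \<gamma>)"

definition whitney_regular :: "'a::euclidean_space set \<Rightarrow> bool" where
  "whitney_regular K \<longleftrightarrow> (\<exists>C>0. \<forall>x\<in>K. \<forall>y\<in>K. \<exists>a b \<gamma>.
     rectifiable_path_in K a b \<gamma> \<and> \<gamma> a = x \<and> \<gamma> b = y \<and> path_length_on a b \<gamma> \<le> C * norm (x - y))"

end

theory Submission
  imports Defs
begin

text \<open>If \<open>\<gamma>\<close> joins \<open>x\<close> to \<open>y\<close> in \<open>K\<close>, then \<open>\<bar>f y - f x\<bar> \<le> \<parallel>df\<parallel> \<cdot> length \<gamma>\<close>; since \<open>df\<close> is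
  only a pointwise derivative on \<open>K\<close>, this is proved by continuous induction along \<open>\<gamma>\<close>. Hence
  Whitney regularity gives the Lipschitz estimate.

  Conversely, let \<open>\<rho>\<close> be the intrinsic distance of \<open>K\<close>, the limit of the lengths of \<open>\<epsilon>\<close>-chains in
  \<open>K\<close> as \<open>\<epsilon> \<rightarrow> 0\<close>. The function \<open>\<rho>(x, \<cdot>)\<close>, capped and smoothed by a partition of unity at
  scale \<open>\<epsilon>\<close>, is a \<open>C\<^sup>1\<close> function whose \<open>C\<^sup>1\<close> norm is bounded independently of \<open>\<epsilon>\<close>, so the
  Lipschitz estimate gives \<open>\<rho>(x, y) \<le> L \<bar>y - x\<bar>\<close> for nearby points. By connectedness and
  compactness \<open>\<rho>\<close> is bounded, hence \<open>\<rho>(x, y) \<le> C \<bar>y - x\<bar>\<close> everywhere. Finally, in a compact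
  set, points at intrinsic distance \<open>\<le> M\<close> have a midpoint at distance \<open>\<le> M/2\<close> from both, and
  iterated midpoints converge to an \<open>M\<close>-Lipschitz path.\<close>

section \<open>Functions of class \<open>C\<^sup>1\<close> on a set\<close>

lemma is_C1_deriv_continuous_on:
  assumes "is_C1_deriv K f df"
  shows "continuous_on K f"
  unfolding continuous_on_def
proof
  fix x assume x: "x \<in> K"
  let ?Q = "\<lambda>y. (f y - f x - inner (df x) (y - x)) / norm (y - x)"
  have "((\<lambda>y. norm (y - x) * ?Q y + inner (df x) (y - x)) \<longlongrightarrow> 0 * 0 + 0) (at x within K)"
    using assms x unfolding is_C1_deriv_def
    by (intro tendsto_intros) (auto intro!: tendsto_eq_intros)
  moreover have "\<forall>\<^sub>F y in at x within K. norm (y - x) * ?Q y + inner (df x) (y - x) = f y - f x"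
    unfolding eventually_at_filter by (auto intro!: always_eventually)
  ultimately have "((\<lambda>y. f y - f x) \<longlongrightarrow> 0) (at x within K)"
    using tendsto_cong by fastforce
  then show "(f \<longlongrightarrow> f x) (at x within K)"
    using Lim_null by blast
qed

lemma is_C1_deriv_local_bound:
  assumes "is_C1_deriv K f df" "p \<in> K" "e > 0"
  obtains d where "d > 0"
    "\<And>y. y \<in> K \<Longrightarrow> norm (y - p) < d \<Longrightarrow> \<bar>f y - f p\<bar> \<le> (norm (df p) + e) * norm (y - p)"
proof -
  have "((\<lambda>y. (f y - f p - inner (df p) (y - p)) / norm (y - p)) \<longlongrightarrow> 0) (at p within K)"
    using assms unfolding is_C1_deriv_def by blast
  then obtain d where d: "d > 0" and close: "\<And>y. y \<in> K \<Longrightarrow> 0 < dist y p \<Longrightarrow> dist y p < d \<Longrightarrow>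
      \<bar>(f y - f p - inner (df p) (y - p)) / norm (y - p)\<bar> < e"
    using assms(3) unfolding Lim_within by (auto simp: dist_real_def)
  have "\<bar>f y - f p\<bar> \<le> (norm (df p) + e) * norm (y - p)" if y: "y \<in> K" "norm (y - p) < d" for y
  proof (cases "y = p")
    case False
    then have "\<bar>f y - f p - inner (df p) (y - p)\<bar> \<le> e * norm (y - p)"
      using close[OF y(1)] y by (simp add: dist_norm divide_less_eq less_imp_le)
    moreover have "\<bar>inner (df p) (y - p)\<bar> \<le> norm (df p) * norm (y - p)"
      by (rule Cauchy_Schwarz_ineq2)
    ultimately show ?thesis by (simp add: algebra_simps)
  qed simp
  with d that show ?thesis by blast
qed

lemma is_C1_derivI:
  fixes f :: "'a::euclidean_space \<Rightarrow> real"
  assumes "\<And>z. z \<in> K \<Longrightarrow> (f has_derivative (\<lambda>h. inner (df z) h)) (at z)"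
    and "continuous_on K df"
  shows "is_C1_deriv K f df"
  unfolding is_C1_deriv_def
proof (intro conjI ballI assms(2))
  fix z assume "z \<in> K"
  then have "(f has_derivative (\<lambda>h. inner (df z) h)) (at z within K)"
    using assms(1) has_derivative_subset by blast
  then have "((\<lambda>y. (1 / norm (y - z)) *\<^sub>R (f y - (f z + inner (df z) (y - z)))) \<longlongrightarrow> 0) (at z within K)"
    unfolding has_derivative_within by blast
  then show "((\<lambda>y. (f y - f z - inner (df z) (y - z)) / norm (y - z)) \<longlongrightarrow> 0) (at z within K)"
    by (simp add: divide_inverse mult.commute diff_diff_eq)
qed

lemma sup_norm_on_upper:
  assumes "compact K" "continuous_on K g" "z \<in> K"
  shows "norm (g z) \<le> sup_norm_on K g"
proof -
  have "compact ((\<lambda>z. norm (g z)) ` K)"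
    by (intro compact_continuous_image continuous_intros assms)
  then have "bdd_above ((\<lambda>z. norm (g z)) ` K)"
    by (intro bounded_imp_bdd_above compact_imp_bounded)
  then show ?thesis
    unfolding sup_norm_on_def using assms(3) by (rule cSUP_upper2) simp
qed

lemma sup_norm_on_nonneg:
  assumes "compact K" "continuous_on K g" "K \<noteq> {}"
  shows "0 \<le> sup_norm_on K g"
  using assms sup_norm_on_upper[OF assms(1,2)] norm_ge_zero order_trans by blast

lemma sup_norm_on_le:
  assumes "K \<noteq> {}" "\<And>z. z \<in> K \<Longrightarrow> norm (g z) \<le> B"
  shows "sup_norm_on K g \<le> B"
  unfolding sup_norm_on_def using assms by (intro cSUP_least) auto

lemma C1_norm_le:
  assumes "compact K" "K \<noteq> {}" "is_C1_deriv K f df"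
    and "\<And>z. z \<in> K \<Longrightarrow> \<bar>f z\<bar> \<le> R" "\<And>z. z \<in> K \<Longrightarrow> norm (df z) \<le> A"
  shows "C1_norm K f \<le> R + A"
proof -
  have "bdd_below {sup_norm_on K df | df. is_C1_deriv K f df}"
    using assms(1,2) sup_norm_on_nonneg unfolding is_C1_deriv_def by (intro bdd_belowI[of _ 0]) blast
  then have "Inf {sup_norm_on K df | df. is_C1_deriv K f df} \<le> sup_norm_on K df"
    using assms(3) by (intro cInf_lower) auto
  moreover have "sup_norm_on K f \<le> R" "sup_norm_on K df \<le> A"
    using assms(2,4,5) by (auto intro: sup_norm_on_le)
  ultimately show ?thesis
    unfolding C1_norm_def by linarith
qed

lemma le_C1_norm_mult:
  assumes "compact K" "x \<in> K" "f \<in> C1 K" "0 \<le> L"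
    and "\<And>df. is_C1_deriv K f df \<Longrightarrow> \<bar>f y - f x\<bar> \<le> sup_norm_on K df * L"
  shows "\<bar>f y - f x\<bar> \<le> C1_norm K f * L"
proof -
  define D where "D = {sup_norm_on K df | df. is_C1_deriv K f df}"
  have "D \<noteq> {}"
    using assms(3) unfolding D_def C1_def by auto
  have "\<bar>f y - f x\<bar> \<le> Inf D * L"
  proof (cases "L = 0")
    case True
    then show ?thesis using assms(5) assms(3) unfolding C1_def by auto
  next
    case False
    with assms(4) have "\<bar>f y - f x\<bar> / L \<le> Inf D"
      using \<open>D \<noteq> {}\<close> assms(5) unfolding D_def by (intro cInf_greatest) (auto simp: divide_le_eq)
    then show ?thesis using False assms(4) by (simp add: divide_le_eq)
  qed
  moreover have "0 \<le> sup_norm_on K f"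
    using assms(1-3) is_C1_deriv_continuous_on sup_norm_on_nonneg unfolding C1_def by blast
  ultimately show ?thesis
    unfolding C1_norm_def D_def[symmetric] using assms(4) by (smt (verit) mult_right_mono)
qed

section \<open>Lengths of paths\<close>

lemma chord_in_polygon_lengths: "a \<le> s \<Longrightarrow> norm (\<gamma> s - \<gamma> a) \<in> polygon_lengths a s \<gamma>"
  unfolding polygon_lengths_def
  by (rule CollectI, rule exI[of _ "\<lambda>j. if j = 0 then a else s"], rule exI[of _ 1]) auto

lemma polygon_lengths_extend:
  assumes "p \<in> polygon_lengths a s \<gamma>" "s \<le> s'"
  shows "p + norm (\<gamma> s' - \<gamma> s) \<in> polygon_lengths a s' \<gamma>"
proof -
  obtain t n where t: "p = (\<Sum>j<n. norm (\<gamma> (t (Suc j)) - \<gamma> (t j)))" "t 0 = a" "t n = s"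
    "\<forall>j<n. t j \<le> t (Suc j)"
    using assms(1) unfolding polygon_lengths_def by blast
  define t' where "t' = t(Suc n := s')"
  have "(\<Sum>j<n. norm (\<gamma> (t' (Suc j)) - \<gamma> (t' j))) = p"
    unfolding t(1) by (rule sum.cong) (auto simp: t'_def)
  then have "(\<Sum>j<Suc n. norm (\<gamma> (t' (Suc j)) - \<gamma> (t' j))) = p + norm (\<gamma> s' - \<gamma> s)"
    using t by (simp add: t'_def)
  moreover have "t' 0 = a" "t' (Suc n) = s'" "\<forall>j<Suc n. t' j \<le> t' (Suc j)"
    using t assms(2) by (auto simp: t'_def less_Suc_eq)
  ultimately show ?thesis
    unfolding polygon_lengths_def by (intro CollectI exI[of _ t'] exI[of _ "Suc n"]) auto
qed

lemma bdd_above_polygon_lengths_mono: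
  assumes "bdd_above (polygon_lengths a b \<gamma>)" "s \<le> b"
  shows "bdd_above (polygon_lengths a s \<gamma>)"
proof -
  obtain B where "\<And>q. q \<in> polygon_lengths a b \<gamma> \<Longrightarrow> q \<le> B"
    using assms(1) by (auto simp: bdd_above_def)
  then have "p \<le> B" if "p \<in> polygon_lengths a s \<gamma>" for p
    using polygon_lengths_extend[OF that assms(2)] by (smt (verit) norm_ge_zero)
  then show ?thesis by (auto simp: bdd_above_def)
qed

lemma path_length_on_add_chord:
  assumes "bdd_above (polygon_lengths a b \<gamma>)" "a \<le> s" "s \<le> s'" "s' \<le> b"
  shows "path_length_on a s \<gamma> + norm (\<gamma> s' - \<gamma> s) \<le> path_length_on a s' \<gamma>"
proof -
  have "bdd_above (polygon_lengths a s' \<gamma>)"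
    using bdd_above_polygon_lengths_mono[OF assms(1,4)] .
  then have "p \<le> path_length_on a s' \<gamma> - norm (\<gamma> s' - \<gamma> s)" if "p \<in> polygon_lengths a s \<gamma>" for p
    using cSup_upper[OF polygon_lengths_extend[OF that assms(3)]] unfolding path_length_on_def by simp
  then have "Sup (polygon_lengths a s \<gamma>) \<le> path_length_on a s' \<gamma> - norm (\<gamma> s' - \<gamma> s)"
    using chord_in_polygon_lengths[OF assms(2)] by (intro cSup_least) auto
  then show ?thesis unfolding path_length_on_def by simp
qed

lemma chord_le_path_length_on:
  assumes "bdd_above (polygon_lengths a b \<gamma>)" "a \<le> s" "s \<le> b"
  shows "norm (\<gamma> s - \<gamma> a) \<le> path_length_on a s \<gamma>"
  unfolding path_length_on_def
  using cSup_upper[OF chord_in_polygon_lengths[OF assms(2)] bdd_above_polygon_lengths_mono[OF assms(1,3)]] .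

lemma path_length_on_nonneg:
  assumes "bdd_above (polygon_lengths a b \<gamma>)" "a \<le> s" "s \<le> b"
  shows "0 \<le> path_length_on a s \<gamma>"
  using chord_le_path_length_on[OF assms] norm_ge_zero order_trans by blast

lemma lipschitz_path_length_on_le:
  assumes "M-lipschitz_on {a..b} \<gamma>" "a \<le> b"
  shows "bdd_above (polygon_lengths a b \<gamma>)" "path_length_on a b \<gamma> \<le> M * (b - a)"
proof -
  have "p \<le> M * (b - a)" if p: "p \<in> polygon_lengths a b \<gamma>" for p
  proof -
    obtain t n where t: "p = (\<Sum>j<n. norm (\<gamma> (t (Suc j)) - \<gamma> (t j)))" "t 0 = a" "t n = b"
      "\<forall>j<n. t j \<le> t (Suc j)"
      using p unfolding polygon_lengths_def by blast
    have mono: "t i \<le> t j" if "i \<le> j" "j \<le> n" for i j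
      using that by (induction j rule: dec_induct) (use t(4) in \<open>auto intro: order_trans\<close>)
    have "t j \<in> {a..b}" if "j \<le> n" for j
      using mono[of 0 j] mono[of j n] that t(2,3) by auto
    then have "norm (\<gamma> (t (Suc j)) - \<gamma> (t j)) \<le> M * (t (Suc j) - t j)" if "j < n" for j
      using lipschitz_onD[OF assms(1), of "t (Suc j)" "t j"] that t(4) by (simp add: dist_norm dist_real_def)
    then have "p \<le> (\<Sum>j<n. M * (t (Suc j) - t j))"
      unfolding t(1) by (intro sum_mono) auto
    also have "\<dots> = M * (b - a)"
      using t(2,3) by (simp add: sum_distrib_left[symmetric] sum_lessThan_telescope)
    finally show ?thesis .
  qed
  then show "bdd_above (polygon_lengths a b \<gamma>)" "path_length_on a b \<gamma> \<le> M * (b - a)"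
    unfolding path_length_on_def using chord_in_polygon_lengths[OF assms(2)]
    by (auto simp: bdd_above_def intro!: cSup_least)
qed

lemma real_interval_induct:
  fixes a b :: real
  assumes "a \<le> b"
    and left: "\<And>s. s \<in> {a..b} \<Longrightarrow> (\<forall>u\<in>{a..<s}. P u) \<Longrightarrow> P s"
    and right: "\<And>s. s \<in> {a..<b} \<Longrightarrow> P s \<Longrightarrow> \<exists>d>0. \<forall>u\<in>{s<..<s + d}. u \<le> b \<longrightarrow> P u"
    and s: "s \<in> {a..b}"
  shows "P s"
proof (rule ccontr)
  define S where "S = {u\<in>{a..b}. \<not> P u}"
  assume "\<not> P s"
  with s have "S \<noteq> {}" by (auto simp: S_def)
  have "bdd_below S" by (auto simp: S_def bdd_below_def)
  define s0 where "s0 = Inf S"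
  have s0_le: "s0 \<le> u" if "u \<in> S" for u
    unfolding s0_def using that \<open>bdd_below S\<close> by (rule cInf_lower)
  have "a \<le> s0"
    unfolding s0_def using \<open>S \<noteq> {}\<close> by (intro cInf_greatest) (auto simp: S_def)
  moreover have "s0 \<le> s"
    using s0_le \<open>\<not> P s\<close> s by (simp add: S_def)
  ultimately have s0: "s0 \<in> {a..b}"
    using s by simp
  have "P s0"
  proof (rule left[OF s0], rule ballI)
    fix u assume "u \<in> {a..<s0}"
    then show "P u" using s0_le s0 by (fastforce simp: S_def)
  qed
  have "s0 \<noteq> b"
  proof
    assume "s0 = b"
    obtain u where "u \<in> S" using \<open>S \<noteq> {}\<close> by blast
    then have "u = s0" using s0_le \<open>s0 = b\<close> by (force simp: S_def)
    with \<open>u \<in> S\<close> \<open>P s0\<close> show False by (simp add: S_def)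
  qed
  then obtain d where "d > 0" and d: "\<forall>u\<in>{s0<..<s0 + d}. u \<le> b \<longrightarrow> P u"
    using right[of s0] \<open>P s0\<close> s0 by auto
  have "s0 + d \<le> u" if "u \<in> S" for u
  proof (rule ccontr)
    assume "\<not> s0 + d \<le> u"
    moreover have "u \<noteq> s0" using that \<open>P s0\<close> by (auto simp: S_def)
    ultimately show False using d s0_le[OF that] that by (auto simp: S_def)
  qed
  then have "s0 + d \<le> s0"
    unfolding s0_def using \<open>S \<noteq> {}\<close> by (intro cInf_greatest)
  with \<open>d > 0\<close> show False by simp
qed

lemma continuous_on_le_of_le_left:
  fixes G :: "real \<Rightarrow> real"
  assumes "continuous_on {a..b} G" "s \<in> {a..b}" "a < s" "\<And>u. u \<in> {a..<s} \<Longrightarrow> G u \<le> c"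
  shows "G s \<le> c"
proof (rule tendsto_upperbound)
  show "(G \<longlongrightarrow> G s) (at s within {a..<s})"
  proof (rule tendsto_within_subset)
    show "(G \<longlongrightarrow> G s) (at s within {a..b})"
      using assms(1,2) unfolding continuous_on_def by blast
  qed (use assms(2) in auto)
  show "\<forall>\<^sub>F u in at s within {a..<s}. G u \<le> c"
    using assms(4) by (auto simp: eventually_at_filter)
  show "\<not> trivial_limit (at s within {a..<s})"
    using assms(2,3) by (simp add: trivial_limit_within)
qed

section \<open>Whitney regularity implies the Lipschitz estimate\<close>

lemma C1_path_local_bound:
  assumes f: "is_C1_deriv K f df" and \<gamma>: "rectifiable_path_in K a b \<gamma>"
    and M: "\<And>z. z \<in> K \<Longrightarrow> norm (df z) \<le> M" and "e > 0" and s: "s \<in> {a..b}"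
  obtains d where "d > 0" "\<And>u. u \<in> {a..b} \<Longrightarrow> \<bar>u - s\<bar> < d \<Longrightarrow>
    \<bar>f (\<gamma> u) - f (\<gamma> s)\<bar> \<le> (M + e) * norm (\<gamma> u - \<gamma> s)"
proof -
  have cont: "continuous_on {a..b} \<gamma>" and img: "\<gamma> ` {a..b} \<subseteq> K"
    using \<gamma> unfolding rectifiable_path_in_def by auto
  then have "\<gamma> s \<in> K" using s by auto
  obtain d where "d > 0" and d: "\<And>y. y \<in> K \<Longrightarrow> norm (y - \<gamma> s) < d \<Longrightarrow>
      \<bar>f y - f (\<gamma> s)\<bar> \<le> (norm (df (\<gamma> s)) + e) * norm (y - \<gamma> s)"
    using is_C1_deriv_local_bound[OF f \<open>\<gamma> s \<in> K\<close> \<open>e > 0\<close>] by blast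
  obtain d' where "d' > 0" and d': "\<And>u. u \<in> {a..b} \<Longrightarrow> dist u s < d' \<Longrightarrow> dist (\<gamma> u) (\<gamma> s) < d"
    using cont[unfolded continuous_on_iff] s \<open>d > 0\<close> by metis
  have "\<bar>f (\<gamma> u) - f (\<gamma> s)\<bar> \<le> (M + e) * norm (\<gamma> u - \<gamma> s)" if "u \<in> {a..b}" "\<bar>u - s\<bar> < d'" for u
  proof -
    have "\<gamma> u \<in> K" using img that(1) by auto
    then have "\<bar>f (\<gamma> u) - f (\<gamma> s)\<bar> \<le> (norm (df (\<gamma> s)) + e) * norm (\<gamma> u - \<gamma> s)"
      using d d'[OF that(1)] that(2) by (simp add: dist_norm dist_real_def)
    also have "\<dots> \<le> (M + e) * norm (\<gamma> u - \<gamma> s)"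
      using M[OF \<open>\<gamma> s \<in> K\<close>] by (intro mult_right_mono) auto
    finally show ?thesis .
  qed
  with \<open>d' > 0\<close> that show ?thesis by blast
qed

text \<open>By continuous induction along the path: the estimate holds up to \<open>s\<close> by continuity of \<open>f \<circ> \<gamma>\<close>
  once it holds before \<open>s\<close>, and it propagates beyond \<open>s\<close> by the pointwise differentiability at \<open>\<gamma> s\<close>.\<close>
lemma C1_diff_le_path_length_approx:
  assumes f: "is_C1_deriv K f df" and \<gamma>: "rectifiable_path_in K a b \<gamma>"
    and M: "\<And>z. z \<in> K \<Longrightarrow> norm (df z) \<le> M" and "e > 0" and s: "s \<in> {a..b}"
  shows "\<bar>f (\<gamma> s) - f (\<gamma> a)\<bar> \<le> (M + e) * path_length_on a s \<gamma>"
proof -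
  have "a \<le> b" and cont: "continuous_on {a..b} \<gamma>" and img: "\<gamma> ` {a..b} \<subseteq> K"
    and bdd: "bdd_above (polygon_lengths a b \<gamma>)"
    using \<gamma> unfolding rectifiable_path_in_def by auto
  let ?G = "\<lambda>s. \<bar>f (\<gamma> s) - f (\<gamma> a)\<bar>" and ?l = "\<lambda>s. path_length_on a s \<gamma>"
  have "\<gamma> a \<in> K"
    using img \<open>a \<le> b\<close> by auto
  then have "M + e > 0"
    using M[of "\<gamma> a"] \<open>e > 0\<close> norm_ge_zero[of "df (\<gamma> a)"] by linarith
  have l_mono: "?l u \<le> ?l s" if "a \<le> u" "u \<le> s" "s \<le> b" for u s
    using path_length_on_add_chord[OF bdd that] norm_ge_zero[of "\<gamma> s - \<gamma> u"] by linarith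
  have "continuous_on {a..b} ?G"
    by (intro continuous_intros continuous_on_compose2[OF is_C1_deriv_continuous_on[OF f] cont img])
  show ?thesis
  proof (rule real_interval_induct[OF \<open>a \<le> b\<close> _ _ s])
    fix s assume s: "s \<in> {a..b}" and below: "\<forall>u\<in>{a..<s}. ?G u \<le> (M + e) * ?l u"
    show "?G s \<le> (M + e) * ?l s"
    proof (cases "s = a")
      case True
      then show ?thesis
        using path_length_on_nonneg[OF bdd] \<open>M + e > 0\<close> \<open>a \<le> b\<close> by simp
    next
      case False
      have "?G u \<le> (M + e) * ?l s" if "u \<in> {a..<s}" for u
      proof -
        have "?G u \<le> (M + e) * ?l u" using below that by blast
        also have "\<dots> \<le> (M + e) * ?l s"
          using l_mono[of u s] that s \<open>M + e > 0\<close> by (intro mult_left_mono) auto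
        finally show ?thesis .
      qed
      moreover have "a < s"
        using s False by simp
      ultimately show ?thesis
        using continuous_on_le_of_le_left[OF \<open>continuous_on {a..b} ?G\<close> s] by blast
    qed
  next
    fix s assume s: "s \<in> {a..<b}" and at_s: "?G s \<le> (M + e) * ?l s"
    obtain d where "d > 0" and d: "\<And>u. u \<in> {a..b} \<Longrightarrow> \<bar>u - s\<bar> < d \<Longrightarrow>
        \<bar>f (\<gamma> u) - f (\<gamma> s)\<bar> \<le> (M + e) * norm (\<gamma> u - \<gamma> s)"
      using C1_path_local_bound[OF f \<gamma> M \<open>e > 0\<close>] s by (metis atLeastLessThan_iff atLeastAtMost_iff less_imp_le)
    have "?G u \<le> (M + e) * ?l u" if "u \<in> {s<..<s + d}" "u \<le> b" for u
    proof -
      have "?G u \<le> (M + e) * (?l s + norm (\<gamma> u - \<gamma> s))"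
        using at_s d[of u] that s by (simp add: distrib_left)
      also have "\<dots> \<le> (M + e) * ?l u"
        using path_length_on_add_chord[OF bdd, of s u] that s \<open>M + e > 0\<close> by (intro mult_left_mono) auto
      finally show ?thesis .
    qed
    with \<open>d > 0\<close> show "\<exists>d>0. \<forall>u\<in>{s<..<s + d}. u \<le> b \<longrightarrow> ?G u \<le> (M + e) * ?l u"
      by blast
  qed
qed

lemma C1_diff_le_path_length:
  assumes f: "is_C1_deriv K f df" and \<gamma>: "rectifiable_path_in K a b \<gamma>"
    and M: "\<And>z. z \<in> K \<Longrightarrow> norm (df z) \<le> M"
  shows "\<bar>f (\<gamma> b) - f (\<gamma> a)\<bar> \<le> M * path_length_on a b \<gamma>"
proof (rule field_le_epsilon)
  fix e :: real assume "e > 0"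
  have "a \<le> b" and bdd: "bdd_above (polygon_lengths a b \<gamma>)"
    using \<gamma> unfolding rectifiable_path_in_def by auto
  define L where "L = path_length_on a b \<gamma>"
  have "L \<ge> 0"
    unfolding L_def using path_length_on_nonneg[OF bdd \<open>a \<le> b\<close> order_refl] .
  define e' where "e' = e / (L + 1)"
  have "e' > 0" "e' * L \<le> e"
    using \<open>e > 0\<close> \<open>L \<ge> 0\<close> by (auto simp: e'_def field_simps)
  have "\<bar>f (\<gamma> b) - f (\<gamma> a)\<bar> \<le> (M + e') * L"
    unfolding L_def using C1_diff_le_path_length_approx[OF f \<gamma> M \<open>e' > 0\<close>] \<open>a \<le> b\<close> by simp
  with \<open>e' * L \<le> e\<close> show "\<bar>f (\<gamma> b) - f (\<gamma> a)\<bar> \<le> M * L + e"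
    by (simp add: distrib_right)
qed

lemma whitney_regular_imp_C1_Lipschitz:
  fixes K :: "'a::euclidean_space set"
  assumes "compact K" "whitney_regular K"
  obtains C where "C > 0" "\<And>f x y. f \<in> C1 K \<Longrightarrow> x \<in> K \<Longrightarrow> y \<in> K \<Longrightarrow> x \<noteq> y \<Longrightarrow>
    \<bar>f y - f x\<bar> / norm (y - x) \<le> C * C1_norm K f"
proof -
  obtain C where "C > 0" and paths: "\<forall>x\<in>K. \<forall>y\<in>K. \<exists>a b \<gamma>. rectifiable_path_in K a b \<gamma> \<and>
      \<gamma> a = x \<and> \<gamma> b = y \<and> path_length_on a b \<gamma> \<le> C * norm (x - y)"
    using assms(2) unfolding whitney_regular_def by blast
  have "\<bar>f y - f x\<bar> / norm (y - x) \<le> C * C1_norm K f"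
    if "f \<in> C1 K" "x \<in> K" "y \<in> K" "x \<noteq> y" for f x y
  proof -
    obtain a b \<gamma> where \<gamma>: "rectifiable_path_in K a b \<gamma>" "\<gamma> a = x" "\<gamma> b = y"
      and short: "path_length_on a b \<gamma> \<le> C * norm (y - x)"
      using paths \<open>x \<in> K\<close> \<open>y \<in> K\<close> by (metis norm_minus_commute)
    have "\<bar>f y - f x\<bar> \<le> C1_norm K f * (C * norm (y - x))"
    proof (rule le_C1_norm_mult[OF assms(1) \<open>x \<in> K\<close> \<open>f \<in> C1 K\<close>])
      show "0 \<le> C * norm (y - x)" using \<open>C > 0\<close> by simp
      fix df assume df: "is_C1_deriv K f df"
      then have "\<bar>f y - f x\<bar> \<le> sup_norm_on K df * path_length_on a b \<gamma>"
        using C1_diff_le_path_length[OF df \<gamma>(1)] sup_norm_on_upper[OF assms(1)] \<gamma>(2,3)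
        unfolding is_C1_deriv_def by blast
      also have "\<dots> \<le> sup_norm_on K df * (C * norm (y - x))"
        using short sup_norm_on_nonneg[OF assms(1)] df \<open>x \<in> K\<close>
        unfolding is_C1_deriv_def by (intro mult_left_mono) auto
      finally show "\<bar>f y - f x\<bar> \<le> sup_norm_on K df * (C * norm (y - x))" .
    qed
    then show ?thesis
      using \<open>x \<noteq> y\<close> by (simp add: divide_le_eq mult_ac)
  qed
  with \<open>C > 0\<close> that show ?thesis by blast
qed

section \<open>Chains and the intrinsic distance\<close>

definition echain_le :: "'a::real_normed_vector set \<Rightarrow> real \<Rightarrow> 'a \<Rightarrow> 'a \<Rightarrow> real \<Rightarrow> bool" where
  "echain_le K e x y L \<longleftrightarrow> (\<exists>z n. z 0 = x \<and> z n = y \<and> (\<forall>i\<le>n. z i \<in> K) \<and>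
     (\<forall>i<n. norm (z (Suc i) - z i) \<le> e) \<and> (\<Sum>i<n. norm (z (Suc i) - z i)) \<le> L)"

lemma sum_lessThan_add_nat: "(\<Sum>i<m + n. g i) = (\<Sum>i<m. g i) + (\<Sum>i<n. g (m + i :: nat))"
  by (induction n) (auto simp: add.assoc)

lemma echain_le_refl: "x \<in> K \<Longrightarrow> 0 \<le> L \<Longrightarrow> echain_le K e x x L"
  unfolding echain_le_def by (intro exI[of _ "\<lambda>i. x"] exI[of _ 0]) auto

lemma echain_le_step:
  "x \<in> K \<Longrightarrow> y \<in> K \<Longrightarrow> norm (y - x) \<le> e \<Longrightarrow> norm (y - x) \<le> L \<Longrightarrow> echain_le K e x y L"
  unfolding echain_le_def by (intro exI[of _ "\<lambda>i. if i = 0 then x else y"] exI[of _ 1]) auto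

lemma echain_le_mono: "echain_le K e x y L \<Longrightarrow> e \<le> e' \<Longrightarrow> L \<le> L' \<Longrightarrow> echain_le K e' x y L'"
  unfolding echain_le_def by (elim exE conjE) (blast intro: order_trans)

lemma echain_le_mem: "echain_le K e x y L \<Longrightarrow> x \<in> K \<and> y \<in> K"
  unfolding echain_le_def by force

lemma norm_le_echain_le: "echain_le K e x y L \<Longrightarrow> norm (y - x) \<le> L"
  unfolding echain_le_def
proof (elim exE conjE)
  fix z n assume "z 0 = x" "z n = y" "(\<Sum>i<n. norm (z (Suc i) - z i)) \<le> L"
  moreover have "norm (z n - z 0) \<le> (\<Sum>i<n. norm (z (Suc i) - z i))"
    unfolding sum_lessThan_telescope[symmetric] by (rule norm_sum)
  ultimately show "norm (y - x) \<le> L" by simp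
qed

lemma echain_le_nonneg: "echain_le K e x y L \<Longrightarrow> 0 \<le> L"
  using norm_le_echain_le norm_ge_zero order_trans by blast

lemma echain_le_sym: "echain_le K e x y L \<Longrightarrow> echain_le K e y x L"
  unfolding echain_le_def
proof (elim exE conjE)
  fix z n assume z: "z 0 = x" "z n = y" "\<forall>i\<le>n. z i \<in> K" "\<forall>i<n. norm (z (Suc i) - z i) \<le> e"
    "(\<Sum>i<n. norm (z (Suc i) - z i)) \<le> L"
  have rev_step: "norm (z (n - Suc i) - z (n - i)) = norm (z (Suc (n - Suc i)) - z (n - Suc i))"
    if "i < n" for i
    using that by (simp add: Suc_diff_Suc norm_minus_commute)
  have "(\<Sum>i<n. norm (z (n - Suc i) - z (n - i))) = (\<Sum>i<n. norm (z (Suc i) - z i))"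
    using sum.nat_diff_reindex[of "\<lambda>i. norm (z (Suc i) - z i)" n] rev_step by simp
  then show "\<exists>z' n'. z' 0 = y \<and> z' n' = x \<and> (\<forall>i\<le>n'. z' i \<in> K) \<and>
      (\<forall>i<n'. norm (z' (Suc i) - z' i) \<le> e) \<and> (\<Sum>i<n'. norm (z' (Suc i) - z' i)) \<le> L"
    using z rev_step by (intro exI[of _ "\<lambda>i. z (n - i)"] exI[of _ n]) auto
qed

lemma echain_le_trans:
  assumes "echain_le K e x y L1" "echain_le K e y w L2"
  shows "echain_le K e x w (L1 + L2)"
proof -
  obtain z1 n1 where 1: "z1 0 = x" "z1 n1 = y" "\<forall>i\<le>n1. z1 i \<in> K"
    "\<forall>i<n1. norm (z1 (Suc i) - z1 i) \<le> e" "(\<Sum>i<n1. norm (z1 (Suc i) - z1 i)) \<le> L1"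
    using assms(1) unfolding echain_le_def by blast
  obtain z2 n2 where 2: "z2 0 = y" "z2 n2 = w" "\<forall>i\<le>n2. z2 i \<in> K"
    "\<forall>i<n2. norm (z2 (Suc i) - z2 i) \<le> e" "(\<Sum>i<n2. norm (z2 (Suc i) - z2 i)) \<le> L2"
    using assms(2) unfolding echain_le_def by blast
  define z where "z i = (if i \<le> n1 then z1 i else z2 (i - n1))" for i
  have z_shift: "z (n1 + i) = z2 i" for i
    using 1(2) 2(1) by (cases i) (auto simp: z_def)
  have "(\<Sum>i<n1. norm (z (Suc i) - z i)) = (\<Sum>i<n1. norm (z1 (Suc i) - z1 i))"
    by (rule sum.cong) (auto simp: z_def)
  then have "(\<Sum>i<n1 + n2. norm (z (Suc i) - z i)) \<le> L1 + L2"
    unfolding sum_lessThan_add_nat using 1(5) 2(5) by (simp add: z_shift[symmetric])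
  moreover have "z i \<in> K" if "i \<le> n1 + n2" for i
    using 1(3) 2(3) z_shift[of "i - n1"] that by (cases "i \<le> n1") (auto simp: z_def)
  moreover have "norm (z (Suc i) - z i) \<le> e" if "i < n1 + n2" for i
  proof (cases "i < n1")
    case False
    then show ?thesis
      using 2(4) z_shift[of "i - n1"] z_shift[of "Suc (i - n1)"] that by (simp add: Suc_diff_le)
  qed (use 1(4) in \<open>simp add: z_def\<close>)
  moreover have "z 0 = x" "z (n1 + n2) = w"
    using 1 2 z_shift[of n2] by (auto simp: z_def)
  ultimately show ?thesis
    unfolding echain_le_def by blast
qed

text \<open>Cut the chain at the last node whose arc length does not exceed half the total length.\<close>
lemma echain_le_split:
  assumes "echain_le K e x y L" "0 \<le> e"
  obtains m where "echain_le K e x m (L/2)" "echain_le K e m y (L/2 + e)"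
proof -
  obtain z n where z: "z 0 = x" "z n = y" "\<forall>i\<le>n. z i \<in> K" "\<forall>i<n. norm (z (Suc i) - z i) \<le> e"
    "(\<Sum>i<n. norm (z (Suc i) - z i)) \<le> L"
    using assms(1) unfolding echain_le_def by blast
  define P where "P j = (\<Sum>i<j. norm (z (Suc i) - z i))" for j
  define J where "J = {j. j \<le> n \<and> P j \<le> P n / 2}"
  define j where "j = Max J"
  have "0 \<le> P n" unfolding P_def by (auto intro: sum_nonneg)
  then have "finite J" "0 \<in> J" unfolding J_def P_def by auto
  then have "j \<in> J"
    unfolding j_def by (intro Max_in) auto
  then have j: "j \<le> n" "P j \<le> P n / 2"
    unfolding J_def by auto
  have j_max: "i \<le> j" if "i \<le> n" "P i \<le> P n / 2" for i
    unfolding j_def using \<open>finite J\<close> that by (intro Max_ge) (auto simp: J_def)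
  have "P n \<le> L" using z(5) unfolding P_def .
  then have "(\<Sum>i<j. norm (z (Suc i) - z i)) \<le> L/2"
    using j(2) unfolding P_def by linarith
  then have first_half: "echain_le K e x (z j) (L/2)"
    unfolding echain_le_def using z(1,3,4) j(1)
    by (intro exI[of _ z] exI[of _ j]) auto
  have "P n - P j \<le> L/2 + e"
  proof (cases "j = n")
    case False
    have "P n / 2 < P (Suc j)"
    proof (rule ccontr)
      assume "\<not> P n / 2 < P (Suc j)"
      then have "Suc j \<le> j" using j(1) False by (intro j_max) auto
      then show False by simp
    qed
    moreover have "P (Suc j) \<le> P j + e" using z(4) j(1) False unfolding P_def by simp
    ultimately show ?thesis using \<open>P n \<le> L\<close> by linarith
  qed (use \<open>0 \<le> P n\<close> \<open>P n \<le> L\<close> assms(2) in auto)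
  moreover have "P (j + (n - j)) = P j + (\<Sum>i<n - j. norm (z (Suc (j + i)) - z (j + i)))"
    unfolding P_def by (rule sum_lessThan_add_nat)
  ultimately have "(\<Sum>i<n - j. norm (z (Suc (j + i)) - z (j + i))) \<le> L/2 + e"
    using j(1) by simp
  then have "echain_le K e (z j) y (L/2 + e)"
    unfolding echain_le_def using z j(1)
    by (intro exI[of _ "\<lambda>i. z (j + i)"] exI[of _ "n - j"]) simp
  with first_half show ?thesis using that by blast
qed

definition intrinsic_dist_le :: "'a::real_normed_vector set \<Rightarrow> 'a \<Rightarrow> 'a \<Rightarrow> real \<Rightarrow> bool" where
  "intrinsic_dist_le K x y L \<longleftrightarrow> (\<forall>e>0. \<forall>\<eta>>0. echain_le K e x y (L + \<eta>))"

lemma intrinsic_dist_le_mono: "intrinsic_dist_le K x y L \<Longrightarrow> L \<le> L' \<Longrightarrow> intrinsic_dist_le K x y L'"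
  unfolding intrinsic_dist_le_def by (meson add_le_cancel_right echain_le_mono order_refl)

lemma intrinsic_dist_le_refl: "x \<in> K \<Longrightarrow> 0 \<le> L \<Longrightarrow> intrinsic_dist_le K x x L"
  unfolding intrinsic_dist_le_def by (auto intro: echain_le_refl)

lemma intrinsic_dist_le_sym: "intrinsic_dist_le K x y L \<Longrightarrow> intrinsic_dist_le K y x L"
  unfolding intrinsic_dist_le_def by (blast intro: echain_le_sym)

lemma intrinsic_dist_le_trans:
  assumes "intrinsic_dist_le K x y L1" "intrinsic_dist_le K y w L2"
  shows "intrinsic_dist_le K x w (L1 + L2)"
  unfolding intrinsic_dist_le_def
proof (intro allI impI)
  fix e \<eta> :: real assume "e > 0" "\<eta> > 0"
  then have "echain_le K e x y (L1 + \<eta>/2)" "echain_le K e y w (L2 + \<eta>/2)"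
    using assms unfolding intrinsic_dist_le_def by auto
  then have "echain_le K e x w ((L1 + \<eta>/2) + (L2 + \<eta>/2))"
    by (rule echain_le_trans)
  then show "echain_le K e x w (L1 + L2 + \<eta>)"
    by (simp add: algebra_simps)
qed

lemma norm_le_intrinsic_dist_le: "intrinsic_dist_le K x y L \<Longrightarrow> norm (y - x) \<le> L"
  unfolding intrinsic_dist_le_def by (meson field_le_epsilon norm_le_echain_le zero_less_one)

lemma intrinsic_dist_le_mem: "intrinsic_dist_le K x y L \<Longrightarrow> x \<in> K \<and> y \<in> K"
  unfolding intrinsic_dist_le_def using echain_le_mem by (metis zero_less_one)

lemma intrinsic_dist_le_approx:
  assumes "l \<in> K"
    and approx: "\<And>e \<eta>. e > 0 \<Longrightarrow> \<eta> > 0 \<Longrightarrow> \<exists>z\<in>K. norm (l - z) < min e \<eta> \<and> echain_le K e x z (L + \<eta>)"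
  shows "intrinsic_dist_le K x l L"
  unfolding intrinsic_dist_le_def
proof (intro allI impI)
  fix e \<eta> :: real assume "e > 0" "\<eta> > 0"
  then obtain z where "z \<in> K" "norm (l - z) < min e (\<eta>/2)" and chain: "echain_le K e x z (L + \<eta>/2)"
    using approx[of e "\<eta>/2"] by auto
  then have "echain_le K e z l (\<eta>/2)"
    using \<open>l \<in> K\<close> by (intro echain_le_step) auto
  with chain have "echain_le K e x l ((L + \<eta>/2) + \<eta>/2)"
    by (rule echain_le_trans)
  then show "echain_le K e x l (L + \<eta>)"
    by (simp add: algebra_simps)
qed

section \<open>Paths from midpoints\<close>

lemma compact_frequently_near:
  fixes m :: "nat \<Rightarrow> 'a::real_normed_vector"
  assumes "compact K" "\<And>k. m k \<in> K"
  obtains l where "l \<in> K" "\<And>d N. d > 0 \<Longrightarrow> \<exists>k\<ge>N. norm (l - m k) < d"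
proof -
  obtain l r where "l \<in> K" "strict_mono r" and lim: "(m \<circ> r) \<longlonglongrightarrow> l"
    using seq_compactE[OF compact_imp_seq_compact[OF assms(1)], of m] assms(2) by blast
  have "\<exists>k\<ge>N. norm (l - m k) < d" if "d > 0" for d N
  proof -
    obtain N' where "\<forall>k\<ge>N'. norm ((m \<circ> r) k - l) < d"
      using lim \<open>d > 0\<close> unfolding LIMSEQ_iff by blast
    then have "norm (l - m (r (max N N'))) < d"
      by (simp add: norm_minus_commute)
    moreover have "N \<le> r (max N N')"
      using seq_suble[OF \<open>strict_mono r\<close>, of "max N N'"] by simp
    ultimately show ?thesis by blast
  qed
  with \<open>l \<in> K\<close> that show ?thesis by blast
qed

text \<open>Approximate midpoints for finer and finer chains accumulate, by compactness, at an exact one.\<close>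
lemma intrinsic_dist_le_midpoint:
  assumes "compact K" "intrinsic_dist_le K x y L"
  obtains m where "m \<in> K" "intrinsic_dist_le K x m (L/2)" "intrinsic_dist_le K m y (L/2)"
proof -
  define e :: "nat \<Rightarrow> real" where "e k = inverse (real (Suc k))" for k
  have "e k > 0" for k by (simp add: e_def)
  have "\<exists>m. echain_le K (e k) x m ((L + e k)/2 + e k) \<and> echain_le K (e k) y m ((L + e k)/2 + e k)" for k
  proof -
    have "echain_le K (e k) x y (L + e k)"
      using assms(2) \<open>e k > 0\<close> unfolding intrinsic_dist_le_def by blast
    then obtain m where m: "echain_le K (e k) x m ((L + e k)/2)" "echain_le K (e k) m y ((L + e k)/2 + e k)"
      using echain_le_split less_imp_le[OF \<open>e k > 0\<close>] by blast
    have "echain_le K (e k) x m ((L + e k)/2 + e k)"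
      by (rule echain_le_mono[OF m(1) order_refl]) (use \<open>e k > 0\<close> in simp)
    with echain_le_sym[OF m(2)] show ?thesis
      by blast
  qed
  then obtain m where m: "\<And>k. echain_le K (e k) x (m k) ((L + e k)/2 + e k)"
    "\<And>k. echain_le K (e k) y (m k) ((L + e k)/2 + e k)"
    by metis
  then have "m k \<in> K" for k using echain_le_mem by blast
  then obtain l where "l \<in> K" and near: "\<And>d N. d > 0 \<Longrightarrow> \<exists>k\<ge>N. norm (l - m k) < d"
    using compact_frequently_near[OF assms(1)] by blast
  have to_l: "intrinsic_dist_le K w l (L/2)"
    if w: "\<And>k. echain_le K (e k) w (m k) ((L + e k)/2 + e k)" for w
  proof (rule intrinsic_dist_le_approx[OF \<open>l \<in> K\<close>])
    fix \<epsilon> \<eta> :: real assume "\<epsilon> > 0" "\<eta> > 0"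
    then obtain N where "inverse (real (Suc N)) < min \<epsilon> (\<eta>/2)"
      using reals_Archimedean[of "min \<epsilon> (\<eta>/2)"] by auto
    moreover obtain k where "N \<le> k" "norm (l - m k) < min \<epsilon> (\<eta>/2)"
      using near[of "min \<epsilon> (\<eta>/2)" N] \<open>\<epsilon> > 0\<close> \<open>\<eta> > 0\<close> by auto
    moreover have "e k \<le> inverse (real (Suc N))"
      unfolding e_def using \<open>N \<le> k\<close> by (simp add: le_imp_inverse_le)
    ultimately have "e k < min \<epsilon> (\<eta>/2)" "norm (l - m k) < min \<epsilon> \<eta>"
      using \<open>\<eta> > 0\<close> by auto
    then have "echain_le K \<epsilon> w (m k) (L/2 + \<eta>)"
      using \<open>e k > 0\<close> by (intro echain_le_mono[OF w]) (auto simp: field_simps)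
    with \<open>norm (l - m k) < min \<epsilon> \<eta>\<close> \<open>m k \<in> K\<close>
    show "\<exists>z\<in>K. norm (l - z) < min \<epsilon> \<eta> \<and> echain_le K \<epsilon> w z (L/2 + \<eta>)"
      by blast
  qed
  show ?thesis
    using that[OF \<open>l \<in> K\<close> to_l[OF m(1)] intrinsic_dist_le_sym[OF to_l[OF m(2)]]] .
qed

definition intrinsic_midpoint :: "'a::real_normed_vector set \<Rightarrow> 'a \<Rightarrow> 'a \<Rightarrow> real \<Rightarrow> 'a" where
  "intrinsic_midpoint K x y L =
     (SOME m. m \<in> K \<and> intrinsic_dist_le K x m (L/2) \<and> intrinsic_dist_le K m y (L/2))"

lemma intrinsic_midpoint:
  assumes "compact K" "intrinsic_dist_le K x y L"
  shows "intrinsic_midpoint K x y L \<in> K"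
    "intrinsic_dist_le K x (intrinsic_midpoint K x y L) (L/2)"
    "intrinsic_dist_le K (intrinsic_midpoint K x y L) y (L/2)"
proof -
  obtain m where "m \<in> K \<and> intrinsic_dist_le K x m (L/2) \<and> intrinsic_dist_le K m y (L/2)"
    using intrinsic_dist_le_midpoint[OF assms] by blast
  from someI[of "\<lambda>m. m \<in> K \<and> intrinsic_dist_le K x m (L/2) \<and> intrinsic_dist_le K m y (L/2)", OF this]
  show "intrinsic_midpoint K x y L \<in> K"
    "intrinsic_dist_le K x (intrinsic_midpoint K x y L) (L/2)"
    "intrinsic_dist_le K (intrinsic_midpoint K x y L) y (L/2)"
    unfolding intrinsic_midpoint_def by auto
qed

text \<open>\<open>dyadic_chain K x y L n k\<close> is to become the point at parameter \<open>k / 2\<^sup>n\<close> of a path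
  from \<open>x\<close> to \<open>y\<close>; each generation inserts midpoints between the points of the previous one.\<close>
primrec dyadic_chain :: "'a::real_normed_vector set \<Rightarrow> 'a \<Rightarrow> 'a \<Rightarrow> real \<Rightarrow> nat \<Rightarrow> nat \<Rightarrow> 'a" where
  "dyadic_chain K x y L 0 k = (if k = 0 then x else y)"
| "dyadic_chain K x y L (Suc n) k = (if even k then dyadic_chain K x y L n (k div 2)
     else intrinsic_midpoint K (dyadic_chain K x y L n (k div 2))
       (dyadic_chain K x y L n (Suc (k div 2))) (L / 2^n))"

lemma dyadic_chain_ends: "dyadic_chain K x y L n 0 = x" "dyadic_chain K x y L n (2^n) = y"
  by (induction n) auto

lemma dyadic_chain_step:
  assumes "compact K" "intrinsic_dist_le K x y L" "k < 2^n"
  shows "intrinsic_dist_le K (dyadic_chain K x y L n k) (dyadic_chain K x y L n (Suc k)) (L / 2^n)"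
  using assms(3)
proof (induction n arbitrary: k)
  case 0
  then show ?case using assms(2) by simp
next
  case (Suc n)
  define j where "j = k div 2"
  have "j < 2^n" using Suc.prems by (simp add: j_def less_mult_imp_div_less)
  then have mid: "intrinsic_midpoint K (dyadic_chain K x y L n j) (dyadic_chain K x y L n (Suc j)) (L / 2^n) \<in> K"
    "intrinsic_dist_le K (dyadic_chain K x y L n j)
       (intrinsic_midpoint K (dyadic_chain K x y L n j) (dyadic_chain K x y L n (Suc j)) (L / 2^n)) (L / 2 ^ Suc n)"
    "intrinsic_dist_le K
       (intrinsic_midpoint K (dyadic_chain K x y L n j) (dyadic_chain K x y L n (Suc j)) (L / 2^n))
       (dyadic_chain K x y L n (Suc j)) (L / 2 ^ Suc n)"
    using intrinsic_midpoint[OF assms(1) Suc.IH[OF \<open>j < 2^n\<close>]] by (simp_all add: mult.commute)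
  show ?case
  proof (cases "even k")
    case True
    then have "Suc k div 2 = j" "odd (Suc k)" unfolding j_def by auto
    then show ?thesis using True mid by (simp add: j_def)
  next
    case False
    then have "Suc k div 2 = Suc j" "even (Suc k)" unfolding j_def by (auto elim!: oddE)
    then show ?thesis using False mid by (simp add: j_def)
  qed
qed

lemma dyadic_chain_mem:
  assumes "compact K" "intrinsic_dist_le K x y L" "k \<le> 2^n"
  shows "dyadic_chain K x y L n k \<in> K"
proof (cases "k = 2^n")
  case True
  then show ?thesis using intrinsic_dist_le_mem[OF assms(2)] by (simp add: dyadic_chain_ends)
next
  case False
  then show ?thesis
    using intrinsic_dist_le_mem[OF dyadic_chain_step[OF assms(1,2)]] assms(3) by simp
qed

lemma dyadic_chain_dist:
  assumes "compact K" "intrinsic_dist_le K x y L" "j \<le> k" "k \<le> 2^n"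
  shows "norm (dyadic_chain K x y L n k - dyadic_chain K x y L n j) \<le> real (k - j) * (L / 2^n)"
  using assms(3,4)
proof (induction k rule: dec_induct)
  case (step i)
  let ?z = "dyadic_chain K x y L n"
  have "norm (?z (Suc i) - ?z j) \<le> norm (?z (Suc i) - ?z i) + norm (?z i - ?z j)"
    using norm_triangle_ineq[of "?z (Suc i) - ?z i" "?z i - ?z j"] by simp
  also have "\<dots> \<le> L / 2^n + real (i - j) * (L / 2^n)"
    using step norm_le_intrinsic_dist_le[OF dyadic_chain_step[OF assms(1,2)]] by (intro add_mono) auto
  also have "\<dots> = real (Suc i - j) * (L / 2^n)"
    using step.hyps by (simp add: Suc_diff_le field_simps)
  finally show ?case .
qed simp

lemma geometric_Cauchy_limit:
  fixes s :: "nat \<Rightarrow> 'a::banach"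
  assumes step: "\<And>n. norm (s (Suc n) - s n) \<le> c / 2 ^ Suc n"
  obtains l where "s \<longlonglongrightarrow> l" "\<And>n. norm (l - s n) \<le> c / 2 ^ n"
proof -
  have "0 \<le> c / 2 ^ Suc 0"
    using step[of 0] norm_ge_zero order_trans by blast
  then have "0 \<le> c" by simp
  have tail: "norm (s m - s n) \<le> c / 2^n - c / 2^m" if "n \<le> m" for m n
    using that
  proof (induction m rule: dec_induct)
    case (step m)
    have "norm (s (Suc m) - s n) \<le> norm (s (Suc m) - s m) + norm (s m - s n)"
      using norm_triangle_ineq[of "s (Suc m) - s m" "s m - s n"] by simp
    also have "\<dots> \<le> c / 2^Suc m + (c / 2^n - c / 2^m)"
      using step.IH assms[of m] by simp
    finally show ?case by (simp add: field_simps)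
  qed simp
  then have tail': "norm (s m - s n) \<le> c / 2^n" if "n \<le> m" for m n
    using that \<open>0 \<le> c\<close> by (smt (verit) divide_nonneg_pos zero_less_power)
  have "Cauchy s"
  proof (rule CauchyI)
    fix e :: real assume "e > 0"
    have "(\<lambda>n. c / 2^n) \<longlonglongrightarrow> 0"
      by (rule LIMSEQ_divide_realpow_zero) simp
    then obtain N where "norm (c / 2^N - 0) < e"
      using \<open>e > 0\<close> unfolding LIMSEQ_iff by blast
    then have N: "c / 2^N < e" using \<open>0 \<le> c\<close> by simp
    have "norm (s m - s n) < e" if "N \<le> m" "N \<le> n" for m n
    proof -
      have "c / 2^min m n \<le> c / 2^N"
        using that \<open>0 \<le> c\<close> by (intro divide_left_mono) auto
      then show ?thesis
        using tail'[of "min m n" "max m n"] N by (cases "m \<le> n") (auto simp: norm_minus_commute)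
    qed
    then show "\<exists>N. \<forall>m\<ge>N. \<forall>n\<ge>N. norm (s m - s n) < e" by blast
  qed
  then obtain l where lim: "s \<longlonglongrightarrow> l"
    using Cauchy_convergent_iff convergent_def by blast
  moreover have "norm (l - s n) \<le> c / 2^n" for n
  proof (rule Lim_bounded[where M=n])
    show "(\<lambda>m. norm (s m - s n)) \<longlonglongrightarrow> norm (l - s n)"
      by (intro tendsto_intros lim)
  qed (use tail' in auto)
  ultimately show ?thesis using that by blast
qed

lemma le_of_le_plus_geometric:
  fixes a b c :: real
  assumes "\<And>n. a \<le> b + c / 2^n"
  shows "a \<le> b"
proof (rule LIMSEQ_le_const)
  show "(\<lambda>n. b + c / 2^n) \<longlonglongrightarrow> b"
    using tendsto_add[OF tendsto_const LIMSEQ_divide_realpow_zero[of 2 c]] by simp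
qed (use assms in blast)

lemma nat_floor_double_div_2:
  fixes x :: real
  assumes "0 \<le> x"
  shows "nat \<lfloor>2 * x\<rfloor> div 2 = nat \<lfloor>x\<rfloor>"
proof -
  have "\<lfloor>2 * x\<rfloor> div 2 = \<lfloor>x\<rfloor>"
    using floor_divide_of_int_eq[of "\<lfloor>2 * x\<rfloor>" 2] floor_divide_real_eq_div[of 2 "2 * x"] by simp
  then show ?thesis using assms by (simp add: nat_div_distrib[symmetric])
qed

lemma dyadic_chain_parent:
  assumes "compact K" "intrinsic_dist_le K x y L" "k \<le> 2 ^ Suc n"
  shows "norm (dyadic_chain K x y L (Suc n) k - dyadic_chain K x y L n (k div 2)) \<le> L / 2 ^ Suc n"
proof (cases "even k")
  case True
  have "0 \<le> L"
    using norm_le_intrinsic_dist_le[OF assms(2)] norm_ge_zero order_trans by blast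
  with True show ?thesis by simp
next
  case False
  then have "k - 1 < 2 ^ Suc n" "even (k - 1)" "Suc (k - 1) = k" "(k - 1) div 2 = k div 2"
    using assms(3) by (auto elim!: oddE)
  with dyadic_chain_step[OF assms(1,2), of "k - 1" "Suc n"] show ?thesis
    using norm_le_intrinsic_dist_le by fastforce
qed

lemma dyadic_chain_floor_dist:
  assumes "compact K" "intrinsic_dist_le K x y L" "a \<in> {0..1}" "b \<in> {0..1}" "a \<le> b"
  shows "norm (dyadic_chain K x y L n (nat \<lfloor>b * 2^n\<rfloor>) - dyadic_chain K x y L n (nat \<lfloor>a * 2^n\<rfloor>))
    \<le> L * (b - a) + L / 2^n"
proof -
  have "0 \<le> L"
    using norm_le_intrinsic_dist_le[OF assms(2)] norm_ge_zero order_trans by blast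
  have idx_mono: "nat \<lfloor>a * 2^n\<rfloor> \<le> nat \<lfloor>b * 2^n\<rfloor>"
    using assms(5) by (intro nat_mono floor_mono) simp
  have "\<lfloor>b * 2^n\<rfloor> \<le> \<lfloor>(2::real)^n\<rfloor>"
    using assms(4) by (intro floor_mono) (simp add: mult_left_le_one_le)
  then have idx_le: "nat \<lfloor>b * 2^n\<rfloor> \<le> 2^n"
    by (simp add: nat_le_iff)
  have idx_diff: "real (nat \<lfloor>b * 2^n\<rfloor>) - real (nat \<lfloor>a * 2^n\<rfloor>) \<le> (b - a) * 2^n + 1"
  proof -
    have "real (nat \<lfloor>b * 2^n\<rfloor>) \<le> b * 2^n" "a * 2^n < real (nat \<lfloor>a * 2^n\<rfloor>) + 1"
      using assms(3,4) by (simp_all add: of_nat_nat)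
    then show ?thesis by (simp add: left_diff_distrib)
  qed
  have "norm (dyadic_chain K x y L n (nat \<lfloor>b * 2^n\<rfloor>) - dyadic_chain K x y L n (nat \<lfloor>a * 2^n\<rfloor>))
      \<le> real (nat \<lfloor>b * 2^n\<rfloor> - nat \<lfloor>a * 2^n\<rfloor>) * (L / 2^n)"
    using dyadic_chain_dist[OF assms(1,2) idx_mono idx_le] .
  also have "\<dots> \<le> ((b - a) * 2^n + 1) * (L / 2^n)"
    using idx_mono idx_diff \<open>0 \<le> L\<close> by (intro mult_right_mono) (simp_all add: of_nat_diff)
  also have "\<dots> = L * (b - a) + L / 2^n"
    by (simp add: field_simps)
  finally show ?thesis .
qed

lemma dyadic_chain_limit:
  fixes K :: "'a::euclidean_space set"
  assumes "compact K" "intrinsic_dist_le K x y L"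
  obtains \<gamma> :: "real \<Rightarrow> 'a" where "\<And>t. t \<in> {0..1} \<Longrightarrow> \<gamma> t \<in> K"
    "\<And>t n. t \<in> {0..1} \<Longrightarrow> norm (\<gamma> t - dyadic_chain K x y L n (nat \<lfloor>t * 2^n\<rfloor>)) \<le> L / 2^n"
proof -
  define s where "s t n = dyadic_chain K x y L n (nat \<lfloor>t * 2^n\<rfloor>)" for t :: real and n
  have idx_le: "nat \<lfloor>t * 2^n\<rfloor> \<le> 2^n" if "t \<in> {0..1}" for t :: real and n
  proof -
    have "\<lfloor>t * 2^n\<rfloor> \<le> \<lfloor>(2::real)^n\<rfloor>"
      using that by (intro floor_mono) (simp add: mult_left_le_one_le)
    then show ?thesis by (simp add: nat_le_iff)
  qed
  have "norm (s t (Suc n) - s t n) \<le> L / 2 ^ Suc n" if "t \<in> {0..1}" for t n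
  proof -
    define k where "k = nat \<lfloor>t * 2 ^ Suc n\<rfloor>"
    have "k div 2 = nat \<lfloor>t * 2^n\<rfloor>"
      unfolding k_def using nat_floor_double_div_2[of "t * 2^n"] that by (simp add: mult_ac)
    moreover have "norm (dyadic_chain K x y L (Suc n) k - dyadic_chain K x y L n (k div 2)) \<le> L / 2 ^ Suc n"
      using dyadic_chain_parent[OF assms idx_le[OF that]] unfolding k_def .
    ultimately show ?thesis
      unfolding s_def k_def by simp
  qed
  then have "\<forall>t\<in>{0..1}. \<exists>l. s t \<longlonglongrightarrow> l \<and> (\<forall>n. norm (l - s t n) \<le> L / 2^n)"
    by (meson geometric_Cauchy_limit)
  then obtain \<gamma> where lim: "\<And>t. t \<in> {0..1} \<Longrightarrow> s t \<longlonglongrightarrow> \<gamma> t"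
    and near: "\<And>t n. t \<in> {0..1} \<Longrightarrow> norm (\<gamma> t - s t n) \<le> L / 2^n"
    by (metis bchoice)
  have "\<gamma> t \<in> K" if "t \<in> {0..1}" for t
  proof (rule closed_sequentially[OF compact_imp_closed[OF assms(1)] _ lim[OF that]])
    fix n
    show "s t n \<in> K"
      unfolding s_def using that by (auto intro!: dyadic_chain_mem[OF assms] idx_le)
  qed
  with near that show ?thesis
    unfolding s_def by blast
qed

text \<open>Comparing two parameters at generation \<open>n\<close> costs an error \<open>O(L / 2\<^sup>n)\<close>, which vanishes
  in the limit.\<close>
lemma intrinsic_dist_le_imp_lipschitz_path:
  fixes K :: "'a::euclidean_space set"
  assumes "compact K" "intrinsic_dist_le K x y L"
  obtains \<gamma> :: "real \<Rightarrow> 'a" where "L-lipschitz_on {0..1} \<gamma>" "\<gamma> ` {0..1} \<subseteq> K" "\<gamma> 0 = x" "\<gamma> 1 = y"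
proof -
  define s where "s t n = dyadic_chain K x y L n (nat \<lfloor>t * 2^n\<rfloor>)" for t :: real and n
  obtain \<gamma> :: "real \<Rightarrow> 'a" where mem: "\<And>t. t \<in> {0..1} \<Longrightarrow> \<gamma> t \<in> K"
    and near: "\<And>t n. t \<in> {0..1} \<Longrightarrow> norm (\<gamma> t - s t n) \<le> L / 2^n"
    using dyadic_chain_limit[OF assms] unfolding s_def by blast
  have "0 \<le> L"
    using norm_le_intrinsic_dist_le[OF assms(2)] norm_ge_zero order_trans by blast
  have forward: "norm (\<gamma> b - \<gamma> a) \<le> L * (b - a)" if ab: "a \<in> {0..1}" "b \<in> {0..1}" "a \<le> b" for a b
  proof (rule le_of_le_plus_geometric)
    fix n
    have "norm (\<gamma> b - \<gamma> a) \<le> norm (\<gamma> b - s b n) + norm (s b n - s a n) + norm (s a n - \<gamma> a)"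
      using norm_triangle_ineq[of "\<gamma> b - s b n" "s b n - s a n"]
        norm_triangle_ineq[of "\<gamma> b - s a n" "s a n - \<gamma> a"] by simp
    also have "\<dots> \<le> L / 2^n + (L * (b - a) + L / 2^n) + L / 2^n"
      using near[OF ab(1)] near[OF ab(2)] dyadic_chain_floor_dist[OF assms ab]
      unfolding s_def by (intro add_mono) (auto simp: norm_minus_commute)
    finally show "norm (\<gamma> b - \<gamma> a) \<le> L * (b - a) + (3 * L) / 2^n"
      by simp
  qed
  have lipschitz: "L-lipschitz_on {0..1} \<gamma>"
  proof (rule lipschitz_onI[OF _ \<open>0 \<le> L\<close>])
    fix a b :: real assume "a \<in> {0..1}" "b \<in> {0..1}"
    then show "dist (\<gamma> a) (\<gamma> b) \<le> L * dist a b"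
      using forward[of a b] forward[of b a]
      by (cases "a \<le> b") (simp_all add: dist_norm dist_real_def norm_minus_commute)
  qed
  have "s 0 n = x" "s 1 n = y" for n
    unfolding s_def by (simp_all add: dyadic_chain_ends nat_power_eq)
  then have "norm (\<gamma> 0 - x) \<le> 0 + L / 2^n" "norm (\<gamma> 1 - y) \<le> 0 + L / 2^n" for n
    using near[of 0 n] near[of 1 n] by simp_all
  then have "norm (\<gamma> 0 - x) \<le> 0" "norm (\<gamma> 1 - y) \<le> 0"
    using le_of_le_plus_geometric by blast+
  then have "\<gamma> 0 = x" "\<gamma> 1 = y"
    by simp_all
  with mem show ?thesis
    by (intro that[OF lipschitz]) auto
qed

section \<open>Smoothing at a fixed scale\<close>

definition bump_profile :: "real \<Rightarrow> real" where
  "bump_profile q = (max 0 (1 - q))\<^sup>2"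

definition bump_profile' :: "real \<Rightarrow> real" where
  "bump_profile' q = - 2 * max 0 (1 - q)"

lemma bump_profile_has_real_derivative: "(bump_profile has_real_derivative bump_profile' q) (at q)"
proof -
  consider "q < 1" | "q = 1" | "q > 1" by linarith
  then show ?thesis
  proof cases
    case 1
    have "((\<lambda>q. (1 - q)\<^sup>2) has_real_derivative - 2 * (1 - q)) (at q)"
      by (auto intro!: derivative_eq_intros)
    moreover have "\<forall>y\<in>{..<1}. (1 - y)\<^sup>2 = bump_profile y"
      by (auto simp: bump_profile_def)
    ultimately have "(bump_profile has_real_derivative - 2 * (1 - q)) (at q)"
      using 1 has_field_derivative_transform_within_open[of "\<lambda>q. (1 - q)\<^sup>2" _ q "{..<1}"] by simp
    then show ?thesis
      using 1 by (simp add: bump_profile'_def)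
  next
    case 2
    have "\<bar>(bump_profile y - bump_profile q) / (y - q)\<bar> \<le> \<bar>y - q\<bar>" for y
    proof (cases "y < 1")
      case True
      then have "(bump_profile y - bump_profile q) / (y - q) = y - q"
        using 2 by (simp add: bump_profile_def power2_eq_square field_simps)
      then show ?thesis by simp
    qed (use 2 in \<open>simp add: bump_profile_def\<close>)
    then have "\<forall>y. norm ((bump_profile y - bump_profile q) / (y - q)) \<le> \<bar>y - q\<bar>"
      by simp
    moreover have "((\<lambda>y. \<bar>y - q\<bar>) \<longlongrightarrow> 0) (at q)"
      by (rule tendsto_rabs_zero, rule LIM_zero, rule tendsto_ident_at)
    ultimately have "((\<lambda>y. (bump_profile y - bump_profile q) / (y - q)) \<longlongrightarrow> 0) (at q)"
      by (rule Lim_null_comparison[OF always_eventually])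
    then show ?thesis
      using 2 by (simp add: has_field_derivative_iff bump_profile'_def)
  next
    case 3
    have "((\<lambda>q. 0) has_real_derivative 0) (at q)"
      by simp
    moreover have "\<forall>y\<in>{1<..}. 0 = bump_profile y"
      by (auto simp: bump_profile_def)
    ultimately have "(bump_profile has_real_derivative 0) (at q)"
      using 3 has_field_derivative_transform_within_open[of "\<lambda>q. 0" _ q "{1<..}"] by simp
    then show ?thesis
      using 3 by (simp add: bump_profile'_def)
  qed
qed

definition bump :: "real \<Rightarrow> 'a::real_inner \<Rightarrow> 'a \<Rightarrow> real" where
  "bump s c z = bump_profile (inner (z - c) (z - c) / s\<^sup>2)"

definition bump_grad :: "real \<Rightarrow> 'a::real_inner \<Rightarrow> 'a \<Rightarrow> 'a" where
  "bump_grad s c z = (bump_profile' (inner (z - c) (z - c) / s\<^sup>2) * 2 / s\<^sup>2) *\<^sub>R (z - c)"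

lemma bump_has_derivative:
  assumes "s \<noteq> 0"
  shows "(bump s c has_derivative (\<lambda>h. inner (bump_grad s c z) h)) (at z)"
proof -
  let ?q = "\<lambda>z. inner (z - c) (z - c) / s\<^sup>2"
  have "(?q has_derivative (\<lambda>h. (inner (z - c) h + inner h (z - c)) / s\<^sup>2)) (at z)"
    by (rule derivative_eq_intros refl | simp add: assms)+
  from DERIV_compose_FDERIV[OF bump_profile_has_real_derivative this]
  have "(bump s c has_derivative (\<lambda>h. (inner (z - c) h + inner h (z - c)) / s\<^sup>2 * bump_profile' (?q z))) (at z)"
    unfolding bump_def[abs_def] .
  moreover have "(inner (z - c) h + inner h (z - c)) / s\<^sup>2 * bump_profile' (?q z) = inner (bump_grad s c z) h" for h
    unfolding bump_grad_def inner_scaleR_left inner_commute[of h "z - c"] by (simp add: field_simps)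
  ultimately show ?thesis
    by simp
qed

lemma continuous_on_bump_grad: "s \<noteq> 0 \<Longrightarrow> continuous_on S (bump_grad s c)"
  unfolding bump_grad_def bump_profile'_def by (intro continuous_intros) auto

lemma bump_nonneg: "0 \<le> bump s c z"
  by (simp add: bump_def bump_profile_def)

lemma bump_inner_unit: "inner (z - c) (z - c) / s\<^sup>2 = (norm (z - c) / s)\<^sup>2"
  by (simp add: power_divide power2_norm_eq_inner)

lemma bump_eq_0: "s \<le> norm (z - c) \<Longrightarrow> 0 < s \<Longrightarrow> bump s c z = 0"
  unfolding bump_def bump_inner_unit bump_profile_def
  by (simp add: one_le_power)

lemma bump_grad_eq_0: "s \<le> norm (z - c) \<Longrightarrow> 0 < s \<Longrightarrow> bump_grad s c z = 0"
  unfolding bump_grad_def bump_inner_unit bump_profile'_def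
  by (simp add: one_le_power)

lemma bump_ge: "norm (z - c) \<le> s / 2 \<Longrightarrow> 0 < s \<Longrightarrow> 9/16 \<le> bump s c z"
proof -
  assume "norm (z - c) \<le> s / 2" "0 < s"
  then have "(norm (z - c) / s)\<^sup>2 \<le> (1/2)\<^sup>2"
    by (intro power_mono) (auto simp: divide_le_eq)
  then have "(3/4)\<^sup>2 \<le> (1 - (norm (z - c) / s)\<^sup>2)\<^sup>2"
    by (intro power_mono) (auto simp: power2_eq_square)
  moreover have "max 0 (1 - (norm (z - c) / s)\<^sup>2) = 1 - (norm (z - c) / s)\<^sup>2"
    using \<open>(norm (z - c) / s)\<^sup>2 \<le> (1/2)\<^sup>2\<close> by (simp add: power2_eq_square)
  ultimately show ?thesis
    unfolding bump_def bump_inner_unit bump_profile_def by (simp add: power2_eq_square)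
qed

lemma norm_lt_of_bump_neq_0: "bump s c z \<noteq> 0 \<Longrightarrow> 0 < s \<Longrightarrow> norm (z - c) < s"
  using bump_eq_0 not_le by blast

lemma sum_bump_ge:
  assumes "finite C" "c \<in> C" "norm (z - c) \<le> s / 2" "0 < s"
  shows "9/16 \<le> (\<Sum>c\<in>C. bump s c z)"
proof -
  have "9/16 \<le> bump s c z"
    using bump_ge assms(3,4) by blast
  also have "\<dots> \<le> (\<Sum>c\<in>C. bump s c z)"
    using assms(1,2) bump_nonneg by (intro member_le_sum) auto
  finally show ?thesis .
qed

lemma norm_bump_grad_le: "0 < s \<Longrightarrow> norm (bump_grad s c z) \<le> 4 / s"
proof (cases "norm (z - c) < s")
  case True
  assume "0 < s"
  have "norm (bump_grad s c z) = \<bar>bump_profile' (inner (z - c) (z - c) / s\<^sup>2)\<bar> * 2 / s\<^sup>2 * norm (z - c)"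
    unfolding bump_grad_def by (simp add: abs_mult)
  also have "\<dots> \<le> 2 * 2 / s\<^sup>2 * s"
    using True \<open>0 < s\<close> by (intro mult_mono divide_right_mono) (auto simp: bump_profile'_def)
  also have "\<dots> = 4 / s"
    using \<open>0 < s\<close> by (simp add: power2_eq_square)
  finally show ?thesis .
qed (simp add: bump_grad_eq_0)

definition lattice_point :: "real \<Rightarrow> ('a \<Rightarrow> int) \<Rightarrow> 'a::euclidean_space" where
  "lattice_point r k = (\<Sum>b\<in>Basis. (r * of_int (k b)) *\<^sub>R b)"

lemma inner_lattice_point: "b \<in> Basis \<Longrightarrow> inner (lattice_point r k) b = r * of_int (k b)"
  unfolding lattice_point_def by (simp add: inner_sum_left_Basis)

lemma lattice_point_near:
  fixes z :: "'a::euclidean_space"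
  assumes "r > 0" "norm z \<le> B" "B / r + 1 \<le> of_int m"
  obtains k where "k \<in> Basis \<rightarrow>\<^sub>E {-m..m}" "norm (z - lattice_point r k) \<le> real DIM('a) * r / 2"
proof -
  define k where "k = (\<lambda>b\<in>Basis. \<lfloor>inner z b / r + 1/2\<rfloor>)"
  have coord: "\<bar>inner z b / r - of_int (k b)\<bar> \<le> 1/2" if "b \<in> Basis" for b
  proof -
    have "k b = \<lfloor>inner z b / r + 1/2\<rfloor>"
      using that by (simp add: k_def)
    moreover have "of_int \<lfloor>inner z b / r + 1/2\<rfloor> \<le> inner z b / r + 1/2"
      "inner z b / r + 1/2 < of_int \<lfloor>inner z b / r + 1/2\<rfloor> + 1"
      by (rule of_int_floor_le, rule real_of_int_floor_add_one_gt)
    ultimately show ?thesis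
      unfolding abs_le_iff by linarith
  qed
  have "k b \<in> {-m..m}" if "b \<in> Basis" for b
  proof -
    have "\<bar>inner z b\<bar> \<le> B"
      using Basis_le_norm[OF that, of z] assms(2) by simp
    then have "\<bar>inner z b / r\<bar> \<le> B / r"
      using assms(1) by (simp add: abs_divide divide_right_mono)
    then have "of_int (- m) \<le> real_of_int (k b)" "real_of_int (k b) \<le> of_int m"
      using coord[OF that] assms(3) unfolding abs_le_iff by linarith+
    then show ?thesis
      by simp
  qed
  then have "k \<in> Basis \<rightarrow>\<^sub>E {-m..m}"
    unfolding k_def by auto
  moreover have "norm (z - lattice_point r k) \<le> (\<Sum>b\<in>Basis. \<bar>inner (z - lattice_point r k) b\<bar>)"
    by (rule norm_le_l1)
  moreover have "\<bar>inner (z - lattice_point r k) b\<bar> \<le> r / 2" if "b \<in> Basis" for b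
  proof -
    have "\<bar>inner (z - lattice_point r k) b\<bar> = r * \<bar>inner z b / r - of_int (k b)\<bar>"
      using that assms(1) by (simp add: inner_diff_left inner_lattice_point abs_mult[symmetric] field_simps)
    also have "\<dots> \<le> r * (1/2)"
      using coord[OF that] assms(1) by (intro mult_left_mono) auto
    finally show ?thesis by simp
  qed
  then have "(\<Sum>b\<in>Basis. \<bar>inner (z - lattice_point r k) b\<bar>) \<le> real DIM('a) * r / 2"
    using sum_mono[of Basis "\<lambda>b. \<bar>inner (z - lattice_point r k) b\<bar>" "\<lambda>_. r / 2"] by simp
  ultimately show ?thesis
    using that by fastforce
qed

definition lattice_box :: "'a::euclidean_space \<Rightarrow> real \<Rightarrow> int \<Rightarrow> ('a \<Rightarrow> int) set" where
  "lattice_box z r D = PiE Basis (\<lambda>b. {\<lceil>inner z b / r\<rceil> - D .. \<lfloor>inner z b / r\<rfloor> + D})"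

lemma lattice_point_in_box:
  fixes z :: "'a::euclidean_space"
  assumes "r > 0" "k \<in> Basis \<rightarrow>\<^sub>E UNIV" "norm (z - lattice_point r k) < of_int D * r"
  shows "k \<in> lattice_box z r D"
proof -
  have "k b \<in> {\<lceil>inner z b / r\<rceil> - D .. \<lfloor>inner z b / r\<rfloor> + D}" if "b \<in> Basis" for b
  proof -
    have "\<bar>inner z b - r * of_int (k b)\<bar> < of_int D * r"
      using Basis_le_norm[OF that, of "z - lattice_point r k"] assms(3)
      by (simp add: inner_diff_left inner_lattice_point that)
    then have "\<bar>inner z b / r - of_int (k b)\<bar> < of_int D"
      using assms(1) by (simp add: abs_less_iff field_simps)
    then have "inner z b / r \<le> of_int (k b + D)" "of_int (k b - D) \<le> inner z b / r"
      by simp_all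
    then have "\<lceil>inner z b / r\<rceil> \<le> k b + D" "k b - D \<le> \<lfloor>inner z b / r\<rfloor>"
      by (simp_all only: ceiling_le_iff le_floor_iff)
    then show ?thesis
      by simp
  qed
  then show ?thesis
    using assms(2) unfolding lattice_box_def by auto
qed

lemma card_lattice_box:
  assumes "0 \<le> D"
  shows "card (lattice_box (z::'a::euclidean_space) r D) \<le> (2 * nat D + 1) ^ DIM('a)"
proof -
  have "card (lattice_box z r D) = (\<Prod>b\<in>Basis. card {\<lceil>inner z b / r\<rceil> - D .. \<lfloor>inner z b / r\<rfloor> + D})"
    unfolding lattice_box_def by (simp add: card_PiE)
  also have "\<dots> \<le> (2 * nat D + 1) ^ card (Basis :: 'a set)"
  proof (rule prod_le_power)
    fix b :: 'a
    have "\<lfloor>inner z b / r\<rfloor> \<le> \<lceil>inner z b / r\<rceil>"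
      by simp
    then show "0 \<le> card {\<lceil>inner z b / r\<rceil> - D .. \<lfloor>inner z b / r\<rfloor> + D} \<and>
        card {\<lceil>inner z b / r\<rceil> - D .. \<lfloor>inner z b / r\<rfloor> + D} \<le> 2 * nat D + 1"
      using assms by simp linarith
  qed auto
  finally show ?thesis by simp
qed

lemma finite_lattice_box: "finite (lattice_box z r D)"
  unfolding lattice_box_def by (intro finite_PiE) auto

lemma bounded_overlap_cover:
  fixes K :: "'a::euclidean_space set"
  assumes "bounded K" "s > 0"
  obtains C where "finite C" "\<And>z. z \<in> K \<Longrightarrow> \<exists>c\<in>C. norm (z - c) \<le> s / 2"
    "\<And>c. c \<in> C \<Longrightarrow> \<exists>p\<in>K. norm (p - c) < s"
    "\<And>z. card {c\<in>C. norm (z - c) < s} \<le> (2 * DIM('a) + 1) ^ DIM('a)"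
proof -
  define r where "r = s / real DIM('a)"
  have "r > 0" "real DIM('a) * r = s"
    using assms(2) by (simp_all add: r_def)
  obtain B where B: "\<And>z. z \<in> K \<Longrightarrow> norm z \<le> B"
    using assms(1) bounded_iff by blast
  define m where "m = \<lceil>B / r\<rceil> + 1"
  have m: "B / r + 1 \<le> of_int m"
    unfolding m_def by linarith
  define C where "C = {c \<in> lattice_point r ` (Basis \<rightarrow>\<^sub>E {-m..m}). \<exists>p\<in>K. norm (p - c) < s}"
  have "finite (lattice_point r ` (Basis \<rightarrow>\<^sub>E {-m..m}))"
    by (intro finite_imageI finite_PiE) auto
  then have "finite C"
    unfolding C_def by (rule rev_finite_subset) auto
  moreover have "\<exists>c\<in>C. norm (z - c) \<le> s / 2" if z: "z \<in> K" for z
  proof -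
    obtain k where "k \<in> Basis \<rightarrow>\<^sub>E {-m..m}" "norm (z - lattice_point r k) \<le> s / 2"
      using lattice_point_near[OF \<open>r > 0\<close> B[OF z] m] \<open>real DIM('a) * r = s\<close> by auto
    moreover from this(2) have "norm (z - lattice_point r k) < s"
      using assms(2) by linarith
    ultimately show ?thesis
      using z unfolding C_def by (intro bexI[of _ "lattice_point r k"]) auto
  qed
  moreover have "card {c\<in>C. norm (z - c) < s} \<le> (2 * DIM('a) + 1) ^ DIM('a)" for z
  proof -
    have "{c\<in>C. norm (z - c) < s} \<subseteq> lattice_point r ` lattice_box z r (int DIM('a))"
      using lattice_point_in_box[OF \<open>r > 0\<close>] \<open>real DIM('a) * r = s\<close> unfolding C_def
      by (force simp: PiE_iff)
    then have "card {c\<in>C. norm (z - c) < s} \<le> card (lattice_box z r (int DIM('a)))"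
      by (meson card_image_le card_mono finite_imageI finite_lattice_box order_trans)
    also have "\<dots> \<le> (2 * DIM('a) + 1) ^ DIM('a)"
      using card_lattice_box[of "int DIM('a)" z r] by simp
    finally show ?thesis .
  qed
  ultimately show ?thesis
    using that unfolding C_def by blast
qed

definition weighted_average :: "'i set \<Rightarrow> ('i \<Rightarrow> real) \<Rightarrow> ('i \<Rightarrow> 'a \<Rightarrow> real) \<Rightarrow> 'a \<Rightarrow> real" where
  "weighted_average I v w z = (\<Sum>i\<in>I. v i * w i z) / (\<Sum>i\<in>I. w i z)"

lemma weighted_average_C1:
  fixes w :: "'i \<Rightarrow> 'a::euclidean_space \<Rightarrow> real"
  assumes "finite I"
    and w: "\<And>i z. (w i has_derivative (\<lambda>h. inner (G i z) h)) (at z)"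
    and G: "\<And>i. continuous_on K (G i)"
    and pos: "\<And>z. z \<in> K \<Longrightarrow> 0 < (\<Sum>i\<in>I. w i z)"
  shows "is_C1_deriv K (weighted_average I v w)
    (\<lambda>z. \<Sum>i\<in>I. ((v i - weighted_average I v w z) / (\<Sum>j\<in>I. w j z)) *\<^sub>R G i z)"
proof (rule is_C1_derivI)
  let ?S = "\<lambda>z. \<Sum>i\<in>I. w i z" and ?N = "\<lambda>z. \<Sum>i\<in>I. v i * w i z"
  fix z assume "z \<in> K"
  then have "?S z \<noteq> 0" using pos by force
  have "(?N has_derivative (\<lambda>h. \<Sum>i\<in>I. v i * inner (G i z) h)) (at z)"
    by (intro has_derivative_sum has_derivative_mult_right w)
  moreover have "(?S has_derivative (\<lambda>h. \<Sum>i\<in>I. inner (G i z) h)) (at z)"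
    by (intro has_derivative_sum w)
  ultimately have "((\<lambda>z. ?N z / ?S z) has_derivative (\<lambda>h. - ?N z * (inverse (?S z) * (\<Sum>i\<in>I. inner (G i z) h)
      * inverse (?S z)) + (\<Sum>i\<in>I. v i * inner (G i z) h) / ?S z)) (at z)"
    using \<open>?S z \<noteq> 0\<close> by (rule has_derivative_divide)
  moreover have "- ?N z * (inverse (?S z) * (\<Sum>i\<in>I. inner (G i z) h) * inverse (?S z))
      + (\<Sum>i\<in>I. v i * inner (G i z) h) / ?S z
      = inner (\<Sum>i\<in>I. ((v i - ?N z / ?S z) / ?S z) *\<^sub>R G i z) h" for h
  proof -
    have "inner (\<Sum>i\<in>I. ((v i - ?N z / ?S z) / ?S z) *\<^sub>R G i z) h
        = (\<Sum>i\<in>I. v i * inner (G i z) h / ?S z - (?N z / ?S z / ?S z) * inner (G i z) h)"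
      unfolding inner_sum_left inner_scaleR_left
      by (rule sum.cong) (simp_all add: diff_divide_distrib left_diff_distrib)
    also have "\<dots> = (\<Sum>i\<in>I. v i * inner (G i z) h) / ?S z - (?N z / ?S z / ?S z) * (\<Sum>i\<in>I. inner (G i z) h)"
      by (simp add: sum_subtractf sum_divide_distrib sum_distrib_left)
    finally show ?thesis
      using \<open>?S z \<noteq> 0\<close> by (simp add: field_simps)
  qed
  ultimately show "(weighted_average I v w has_derivative
      (\<lambda>h. inner (\<Sum>i\<in>I. ((v i - weighted_average I v w z) / ?S z) *\<^sub>R G i z) h)) (at z)"
    unfolding weighted_average_def[abs_def] by simp
next
  have "continuous_on K (w i)" for i
    using w by (meson has_derivative_continuous continuous_at_imp_continuous_on)
  then show "continuous_on K (\<lambda>z. \<Sum>i\<in>I. ((v i - weighted_average I v w z) / (\<Sum>j\<in>I. w j z)) *\<^sub>R G i z)"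
    unfolding weighted_average_def using pos
    by (intro continuous_intros G) force+
qed

lemma weighted_average_near:
  assumes "finite I" "\<And>i. i \<in> I \<Longrightarrow> 0 \<le> w i z" "0 < (\<Sum>i\<in>I. w i z)"
    and "\<And>i. i \<in> I \<Longrightarrow> w i z \<noteq> 0 \<Longrightarrow> \<bar>v i - a\<bar> \<le> \<delta>"
  shows "\<bar>weighted_average I v w z - a\<bar> \<le> \<delta>"
proof -
  have "weighted_average I v w z - a = (\<Sum>i\<in>I. w i z * (v i - a)) / (\<Sum>i\<in>I. w i z)"
    using assms(3) unfolding weighted_average_def
    by (simp add: field_simps sum_subtractf sum_distrib_left sum_distrib_right)
  moreover have "\<bar>\<Sum>i\<in>I. w i z * (v i - a)\<bar> \<le> (\<Sum>i\<in>I. w i z) * \<delta>"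
  proof -
    have "\<bar>w i z * (v i - a)\<bar> \<le> w i z * \<delta>" if "i \<in> I" for i
      using assms(2,4)[OF that] by (cases "w i z = 0") (auto simp: abs_mult intro: mult_left_mono)
    then have "\<bar>\<Sum>i\<in>I. w i z * (v i - a)\<bar> \<le> (\<Sum>i\<in>I. w i z * \<delta>)"
      by (intro order_trans[OF sum_abs sum_mono])
    then show ?thesis
      by (simp add: sum_distrib_right)
  qed
  ultimately show ?thesis
    using assms(3) by (simp add: abs_divide divide_le_eq mult.commute)
qed

lemma weighted_average_range:
  assumes "finite I" "\<And>i. i \<in> I \<Longrightarrow> 0 \<le> w i z" "0 < (\<Sum>i\<in>I. w i z)"
    and "\<And>i. i \<in> I \<Longrightarrow> 0 \<le> v i \<and> v i \<le> R"
  shows "0 \<le> weighted_average I v w z \<and> weighted_average I v w z \<le> R"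
proof -
  have "\<bar>v i - R/2\<bar> \<le> R/2" if "i \<in> I" for i
    using assms(4)[OF that] unfolding abs_le_iff by linarith
  then have "\<bar>weighted_average I v w z - R/2\<bar> \<le> R/2"
    using assms(1-3) by (intro weighted_average_near) auto
  then show ?thesis
    unfolding abs_le_iff by linarith
qed

lemma norm_bump_average_grad_le:
  fixes z :: "'a::real_inner"
  assumes "finite C" "s > 0" "9/16 \<le> S"
    and near: "\<And>c. c \<in> C \<Longrightarrow> norm (z - c) < s \<Longrightarrow> \<bar>v c - a\<bar> \<le> 4 * s"
  shows "norm (\<Sum>c\<in>C. ((v c - a) / S) *\<^sub>R bump_grad s c z) \<le> 256/9 * card {c\<in>C. norm (z - c) < s}"
proof -
  let ?A = "{c\<in>C. norm (z - c) < s}"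
  have summand: "norm (((v c - a) / S) *\<^sub>R bump_grad s c z) \<le> (if c \<in> ?A then 256/9 else 0)"
    if "c \<in> C" for c
  proof (cases "norm (z - c) < s")
    case True
    have "\<bar>v c - a\<bar> / S * norm (bump_grad s c z) \<le> (4 * s) / (9/16) * (4 / s)"
      using near[OF that True] assms(3) norm_bump_grad_le[OF \<open>s > 0\<close>]
      by (intro mult_mono frac_le) auto
    moreover have "\<bar>S\<bar> = S"
      using assms(3) by simp
    ultimately show ?thesis
      using True that \<open>s > 0\<close> by (simp add: abs_divide)
  qed (simp add: bump_grad_eq_0 \<open>s > 0\<close>)
  have "norm (\<Sum>c\<in>C. ((v c - a) / S) *\<^sub>R bump_grad s c z) \<le> (\<Sum>c\<in>C. if c \<in> ?A then 256/9 else 0)"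
    by (intro order_trans[OF norm_sum sum_mono] summand)
  also have "\<dots> = 256/9 * card ?A"
    using \<open>finite C\<close> by (simp add: sum.If_cases Int_def)
  finally show ?thesis .
qed

lemma abs_diff_le_of_step_bound:
  assumes step: "\<And>z w. z \<in> K \<Longrightarrow> w \<in> K \<Longrightarrow> norm (w - z) \<le> \<epsilon> \<Longrightarrow> \<phi> w \<le> \<phi> z + norm (w - z)"
    and "z \<in> K" "w \<in> K" "norm (w - z) \<le> \<epsilon>"
  shows "\<bar>\<phi> w - \<phi> z\<bar> \<le> norm (w - z)"
  using step[OF assms(2-4)] step[OF assms(3,2)] assms(4) by (simp add: norm_minus_commute abs_le_iff)

definition C1_smoothing_bound :: "'a::euclidean_space itself \<Rightarrow> real" where
  "C1_smoothing_bound _ = 256/9 * (2 * DIM('a) + 1) ^ DIM('a)"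

text \<open>The derivative bound does not depend on \<open>\<epsilon>\<close>: the weights are bumps of radius \<open>s \<sim> \<epsilon>\<close>,
  with gradients of size \<open>1/s\<close>, but the values they average differ by \<open>O(s)\<close> from each other and
  only boundedly many of them overlap at any point.\<close>
lemma smooth_approx:
  fixes K :: "'a::euclidean_space set" and \<phi> :: "'a \<Rightarrow> real"
  assumes "compact K" "\<epsilon> > 0" "\<eta> > 0"
    and range: "\<And>z. z \<in> K \<Longrightarrow> 0 \<le> \<phi> z \<and> \<phi> z \<le> R"
    and lip: "\<And>z w. z \<in> K \<Longrightarrow> w \<in> K \<Longrightarrow> norm (w - z) \<le> \<epsilon> \<Longrightarrow> \<phi> w \<le> \<phi> z + norm (w - z)"
  obtains f df where "is_C1_deriv K f df" "\<And>z. z \<in> K \<Longrightarrow> 0 \<le> f z \<and> f z \<le> R"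
    "\<And>z. z \<in> K \<Longrightarrow> norm (df z) \<le> C1_smoothing_bound TYPE('a)"
    "\<And>z. z \<in> K \<Longrightarrow> \<bar>f z - \<phi> z\<bar> \<le> \<eta>"
proof -
  define s where "s = min (\<epsilon>/4) (\<eta>/2)"
  have "s > 0" "4 * s \<le> \<epsilon>" "2 * s \<le> \<eta>"
    using assms(2,3) by (auto simp: s_def)
  obtain C where "finite C" and cover: "\<And>z. z \<in> K \<Longrightarrow> \<exists>c\<in>C. norm (z - c) \<le> s / 2"
    and near_K: "\<And>c. c \<in> C \<Longrightarrow> \<exists>p\<in>K. norm (p - c) < s"
    and overlap: "\<And>z. card {c\<in>C. norm (z - c) < s} \<le> (2 * DIM('a) + 1) ^ DIM('a)"
    using bounded_overlap_cover[OF compact_imp_bounded[OF assms(1)] \<open>s > 0\<close>] by blast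
  obtain p where p: "\<And>c. c \<in> C \<Longrightarrow> p c \<in> K \<and> norm (p c - c) < s"
    using near_K by metis
  define v where "v c = \<phi> (p c)" for c
  define S where "S z = (\<Sum>c\<in>C. bump s c z)" for z
  define f where "f = weighted_average C v (bump s)"
  define df where "df z = (\<Sum>c\<in>C. ((v c - f z) / S z) *\<^sub>R bump_grad s c z)" for z
  have S_ge: "9/16 \<le> S z" if "z \<in> K" for z
    using cover[OF that] sum_bump_ge[OF \<open>finite C\<close> _ _ \<open>s > 0\<close>] unfolding S_def by blast
  have v_near: "\<bar>v c - \<phi> z\<bar> \<le> 2 * s" if "c \<in> C" "z \<in> K" "norm (z - c) < s" for c z
  proof -
    have "norm (p c - z) < 2 * s"
      using p[OF that(1)] that(3) norm_triangle_ineq4[of "p c - c" "z - c"] by simp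
    moreover from this have "norm (p c - z) \<le> \<epsilon>"
      using \<open>4 * s \<le> \<epsilon>\<close> \<open>s > 0\<close> by linarith
    then have "\<bar>\<phi> (p c) - \<phi> z\<bar> \<le> norm (p c - z)"
      using abs_diff_le_of_step_bound[where \<phi> = \<phi> and K = K and \<epsilon> = \<epsilon>, OF lip] \<open>z \<in> K\<close> p[OF \<open>c \<in> C\<close>]
      by blast
    ultimately show ?thesis
      unfolding v_def by linarith
  qed
  have f_near: "\<bar>f z - \<phi> z\<bar> \<le> 2 * s" if "z \<in> K" for z
  proof -
    have "\<bar>v c - \<phi> z\<bar> \<le> 2 * s" if "c \<in> C" "bump s c z \<noteq> 0" for c
      using v_near[OF that(1) \<open>z \<in> K\<close> norm_lt_of_bump_neq_0[OF that(2) \<open>s > 0\<close>]] .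
    then show ?thesis
      unfolding f_def using S_ge[OF that]
      by (intro weighted_average_near \<open>finite C\<close> bump_nonneg) (auto simp: S_def)
  qed
  have "is_C1_deriv K f df"
    unfolding f_def df_def S_def using \<open>finite C\<close> \<open>s > 0\<close> S_ge
    by (intro weighted_average_C1 bump_has_derivative continuous_on_bump_grad) (force simp: S_def)+
  moreover have "0 \<le> f z \<and> f z \<le> R" if "z \<in> K" for z
    unfolding f_def using S_ge[OF that] range p unfolding v_def
    by (intro weighted_average_range \<open>finite C\<close> bump_nonneg) (auto simp: S_def)
  moreover have "norm (df z) \<le> C1_smoothing_bound TYPE('a)" if "z \<in> K" for z
  proof -
    have "\<bar>v c - f z\<bar> \<le> 4 * s" if "c \<in> C" "norm (z - c) < s" for c
      using v_near[OF that(1) \<open>z \<in> K\<close> that(2)] f_near[OF \<open>z \<in> K\<close>] by linarith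
    then have "norm (df z) \<le> 256/9 * card {c\<in>C. norm (z - c) < s}"
      unfolding df_def using \<open>finite C\<close> \<open>s > 0\<close> S_ge[OF \<open>z \<in> K\<close>]
      by (intro norm_bump_average_grad_le) auto
    also have "\<dots> \<le> C1_smoothing_bound TYPE('a)"
      using overlap[of z] unfolding C1_smoothing_bound_def
      by (simp del: of_nat_power add: of_nat_le_iff[symmetric])
    finally show ?thesis .
  qed
  moreover have "\<bar>f z - \<phi> z\<bar> \<le> \<eta>" if "z \<in> K" for z
    using f_near[OF that] \<open>2 * s \<le> \<eta>\<close> by linarith
  ultimately show ?thesis
    using that by blast
qed

section \<open>The Lipschitz estimate implies Whitney regularity\<close>

text \<open>The cap \<open>R\<close> keeps the infimum meaningful when no \<open>e\<close>-chain joins \<open>x\<close> to \<open>z\<close>.\<close>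
definition capped_chain_dist :: "'a::real_normed_vector set \<Rightarrow> real \<Rightarrow> 'a \<Rightarrow> real \<Rightarrow> 'a \<Rightarrow> real" where
  "capped_chain_dist K e x R z = Inf (insert R {L. echain_le K e x z L})"

lemma capped_chain_dist_bounds:
  assumes "0 \<le> R"
  shows "0 \<le> capped_chain_dist K e x R z" "capped_chain_dist K e x R z \<le> R"
proof -
  have nonneg: "0 \<le> u" if "u \<in> insert R {L. echain_le K e x z L}" for u
    using that assms echain_le_nonneg by auto
  then show "0 \<le> capped_chain_dist K e x R z"
    unfolding capped_chain_dist_def by (intro cInf_greatest) auto
  show "capped_chain_dist K e x R z \<le> R"
    unfolding capped_chain_dist_def using nonneg by (intro cInf_lower bdd_belowI[of _ 0]) auto
qed

lemma capped_chain_dist_start: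
  assumes "x \<in> K" "0 \<le> R"
  shows "capped_chain_dist K e x R x \<le> 0"
proof -
  have "0 \<le> u" if "u \<in> insert R {L. echain_le K e x x L}" for u
    using that assms echain_le_nonneg by auto
  then show ?thesis
    unfolding capped_chain_dist_def using echain_le_refl[OF assms(1) order_refl]
    by (intro cInf_lower bdd_belowI[of _ 0]) auto
qed

lemma capped_chain_dist_step:
  assumes "z \<in> K" "w \<in> K" "norm (w - z) \<le> e" "0 \<le> R"
  shows "capped_chain_dist K e x R w \<le> capped_chain_dist K e x R z + norm (w - z)"
proof -
  let ?d = "capped_chain_dist K e x R"
  have bdd: "bdd_below (insert R {L. echain_le K e x w L})"
    using assms(4) echain_le_nonneg by (intro bdd_belowI[of _ 0]) auto
  have "?d w - norm (w - z) \<le> u" if "u \<in> insert R {L. echain_le K e x z L}" for u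
  proof (cases "u = R")
    case True
    then show ?thesis
      using capped_chain_dist_bounds(2)[OF assms(4), of K e x w] norm_ge_zero[of "w - z"] by linarith
  next
    case False
    then have "echain_le K e x w (u + norm (w - z))"
      using that assms(1-3) by (auto intro: echain_le_trans echain_le_step)
    then have "?d w \<le> u + norm (w - z)"
      unfolding capped_chain_dist_def using bdd by (intro cInf_lower) auto
    then show ?thesis by simp
  qed
  then have "?d w - norm (w - z) \<le> ?d z"
    unfolding capped_chain_dist_def[of K e x R z] by (intro cInf_greatest) auto
  then show ?thesis by simp
qed

lemma echain_le_of_capped_chain_dist_less:
  assumes "capped_chain_dist K e x R y < R" "capped_chain_dist K e x R y < L"
  shows "echain_le K e x y L"
proof -
  obtain u where "u \<in> insert R {L. echain_le K e x y L}" "u < min R L"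
    using cInf_lessD[of "insert R {L. echain_le K e x y L}" "min R L"] assms
    unfolding capped_chain_dist_def by auto
  then show ?thesis
    by (auto intro: echain_le_mono)
qed

lemma smooth_capped_chain_dist:
  fixes K :: "'a::euclidean_space set"
  assumes "compact K" "x \<in> K" "0 \<le> R" "\<epsilon> > 0" "\<delta> > 0"
  obtains f where "f \<in> C1 K" "C1_norm K f \<le> R + C1_smoothing_bound TYPE('a)"
    "\<And>z. z \<in> K \<Longrightarrow> \<bar>f z - capped_chain_dist K \<epsilon> x R z\<bar> \<le> \<delta>"
proof -
  let ?\<phi> = "capped_chain_dist K \<epsilon> x R"
  have range: "0 \<le> ?\<phi> z \<and> ?\<phi> z \<le> R" for z
    using capped_chain_dist_bounds[OF \<open>0 \<le> R\<close>] by blast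
  have step: "?\<phi> w \<le> ?\<phi> z + norm (w - z)" if "z \<in> K" "w \<in> K" "norm (w - z) \<le> \<epsilon>" for z w
    using capped_chain_dist_step[OF that \<open>0 \<le> R\<close>] .
  obtain f df where f: "is_C1_deriv K f df" "\<And>z. z \<in> K \<Longrightarrow> 0 \<le> f z \<and> f z \<le> R"
    "\<And>z. z \<in> K \<Longrightarrow> norm (df z) \<le> C1_smoothing_bound TYPE('a)"
    "\<And>z. z \<in> K \<Longrightarrow> \<bar>f z - ?\<phi> z\<bar> \<le> \<delta>"
    using smooth_approx[OF assms(1,4,5) range step] by blast
  have "\<bar>f z\<bar> \<le> R" if "z \<in> K" for z
    using f(2)[OF that] by simp
  then have "C1_norm K f \<le> R + C1_smoothing_bound TYPE('a)"
    using C1_norm_le[OF assms(1) _ f(1)] f(3) \<open>x \<in> K\<close> by blast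
  moreover have "f \<in> C1 K"
    using f(1) unfolding C1_def by blast
  ultimately show ?thesis
    using that f(4) by blast
qed

text \<open>Apply the hypothesis to a smoothing of the chain distance from \<open>x\<close>, capped at a level \<open>R\<close>
  chosen so large that the cap is not attained at \<open>y\<close>.\<close>
lemma echain_le_of_C1_Lipschitz:
  fixes K :: "'a::euclidean_space set"
  assumes "compact K" "C > 0"
    and hyp: "\<And>f x y. f \<in> C1 K \<Longrightarrow> x \<in> K \<Longrightarrow> y \<in> K \<Longrightarrow> x \<noteq> y \<Longrightarrow>
      \<bar>f y - f x\<bar> / norm (y - x) \<le> C * C1_norm K f"
    and "x \<in> K" "y \<in> K" "x \<noteq> y" "2 * C * norm (y - x) \<le> 1" "\<epsilon> > 0" "\<eta> > 0"
  shows "echain_le K \<epsilon> x y (C * (2 * C1_smoothing_bound TYPE('a) + 1) * norm (y - x) + \<eta>)"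
proof -
  define A where "A = C1_smoothing_bound TYPE('a)"
  define t where "t = norm (y - x)"
  define R where "R = 2 * C * A * t + 1"
  define T where "T = C * (R + A) * t"
  have "0 \<le> A" "t > 0"
    using \<open>x \<noteq> y\<close> by (simp_all add: A_def C1_smoothing_bound_def t_def)
  have "2 * C * t \<le> 1"
    using assms(7) by (simp add: t_def)
  have "1 \<le> R"
    unfolding R_def using \<open>C > 0\<close> \<open>0 \<le> A\<close> \<open>t > 0\<close> by simp
  have "T < R"
  proof -
    have "R * (2 * C * t) \<le> R * 1"
      using \<open>2 * C * t \<le> 1\<close> \<open>1 \<le> R\<close> by (intro mult_left_mono) auto
    then have "C * R * t \<le> R / 2" by (simp add: mult_ac)
    moreover have "C * A * t < R / 2" by (simp add: R_def)
    ultimately show ?thesis unfolding T_def by (simp add: algebra_simps)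
  qed
  have "T \<le> C * (2 * A + 1) * t"
  proof -
    have "A * (2 * C * t) \<le> A" using \<open>2 * C * t \<le> 1\<close> \<open>0 \<le> A\<close> by (simp add: mult_left_le)
    then have "R + A \<le> 2 * A + 1" unfolding R_def by (simp add: mult_ac)
    then show ?thesis unfolding T_def using \<open>C > 0\<close> \<open>t > 0\<close> by simp
  qed
  define \<phi> where "\<phi> = capped_chain_dist K \<epsilon> x R"
  define \<delta> where "\<delta> = min \<eta> (R - T)"
  have "\<delta>/3 > 0" "0 \<le> R" using \<open>\<eta> > 0\<close> \<open>T < R\<close> \<open>1 \<le> R\<close> by (simp_all add: \<delta>_def)
  then obtain f where "f \<in> C1 K" "C1_norm K f \<le> R + A" and f_near: "\<And>z. z \<in> K \<Longrightarrow> \<bar>f z - \<phi> z\<bar> \<le> \<delta>/3"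
    using smooth_capped_chain_dist[OF assms(1,4) \<open>0 \<le> R\<close> \<open>\<epsilon> > 0\<close> \<open>\<delta>/3 > 0\<close>] unfolding \<phi>_def A_def by blast
  then have "\<bar>f y - f x\<bar> / t \<le> C * (R + A)"
    using hyp[OF \<open>f \<in> C1 K\<close> assms(4-6)] \<open>C > 0\<close> unfolding t_def by (smt (verit) mult_left_mono)
  then have "\<bar>f y - f x\<bar> \<le> T"
    using \<open>t > 0\<close> unfolding T_def by (simp add: divide_le_eq mult_ac)
  moreover have "\<phi> x \<le> 0"
    unfolding \<phi>_def using capped_chain_dist_start[OF \<open>x \<in> K\<close> \<open>0 \<le> R\<close>] .
  ultimately have "\<phi> y < T + \<delta>"
    using f_near[OF \<open>x \<in> K\<close>] f_near[OF \<open>y \<in> K\<close>] \<open>\<delta>/3 > 0\<close> by linarith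
  then have "\<phi> y < R" "\<phi> y < C * (2 * A + 1) * t + \<eta>"
    using \<open>T \<le> C * (2 * A + 1) * t\<close> by (auto simp: \<delta>_def)
  then show ?thesis
    unfolding \<phi>_def A_def t_def by (rule echain_le_of_capped_chain_dist_less)
qed

lemma intrinsic_dist_le_of_C1_Lipschitz:
  fixes K :: "'a::euclidean_space set"
  assumes "compact K" "C > 0"
    and hyp: "\<And>f x y. f \<in> C1 K \<Longrightarrow> x \<in> K \<Longrightarrow> y \<in> K \<Longrightarrow> x \<noteq> y \<Longrightarrow>
      \<bar>f y - f x\<bar> / norm (y - x) \<le> C * C1_norm K f"
    and "x \<in> K" "y \<in> K" "2 * C * norm (y - x) \<le> 1"
  shows "intrinsic_dist_le K x y (C * (2 * C1_smoothing_bound TYPE('a) + 1) * norm (y - x))"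
proof (cases "x = y")
  case True
  then show ?thesis using intrinsic_dist_le_refl[OF \<open>x \<in> K\<close>] by simp
next
  case False
  then show ?thesis
    unfolding intrinsic_dist_le_def using echain_le_of_C1_Lipschitz[OF assms(1,2) hyp assms(4-5) False assms(6)]
    by blast
qed

lemma connected_imp_intrinsic_dist_finite:
  assumes "connected K" "\<delta> > 0"
    and local: "\<And>x y. x \<in> K \<Longrightarrow> y \<in> K \<Longrightarrow> norm (y - x) < \<delta> \<Longrightarrow> \<exists>M. intrinsic_dist_le K x y M"
    and "x \<in> K" "y \<in> K"
  shows "\<exists>M. intrinsic_dist_le K x y M"
proof (rule connected_induction_simple[OF assms(1) \<open>x \<in> K\<close> \<open>y \<in> K\<close>])
  show "\<exists>M. intrinsic_dist_le K x x M"
    using intrinsic_dist_le_refl[OF \<open>x \<in> K\<close> order_refl] by blast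
  fix a assume "a \<in> K"
  show "\<exists>T. openin (top_of_set K) T \<and> a \<in> T \<and>
      (\<forall>u\<in>T. \<forall>v\<in>T. (\<exists>M. intrinsic_dist_le K x u M) \<longrightarrow> (\<exists>M. intrinsic_dist_le K x v M))"
  proof (intro exI[of _ "K \<inter> ball a (\<delta>/2)"] conjI ballI impI)
    show "openin (top_of_set K) (K \<inter> ball a (\<delta>/2))"
      by (simp add: openin_open_Int)
    show "a \<in> K \<inter> ball a (\<delta>/2)"
      using \<open>a \<in> K\<close> \<open>\<delta> > 0\<close> by simp
    fix u v assume "u \<in> K \<inter> ball a (\<delta>/2)" "v \<in> K \<inter> ball a (\<delta>/2)" "\<exists>M. intrinsic_dist_le K x u M"
    moreover from calculation(1,2) have "norm (v - u) < \<delta>"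
      using dist_triangle_half_l[of u a "\<delta>" v] by (simp add: dist_norm norm_minus_commute)
    ultimately show "\<exists>M. intrinsic_dist_le K x v M"
      using local[of u v] by (blast intro: intrinsic_dist_le_trans)
  qed
qed

lemma intrinsic_dist_uniformly_bounded:
  fixes K :: "'a::euclidean_space set"
  assumes "compact K" "connected K" "\<delta> > 0" "0 \<le> L"
    and local: "\<And>x y. x \<in> K \<Longrightarrow> y \<in> K \<Longrightarrow> norm (y - x) \<le> \<delta> \<Longrightarrow> intrinsic_dist_le K x y (L * norm (y - x))"
  obtains B where "0 \<le> B" "\<And>x y. x \<in> K \<Longrightarrow> y \<in> K \<Longrightarrow> intrinsic_dist_le K x y B"
proof -
  have local_\<delta>: "intrinsic_dist_le K x y (L * \<delta>)" if "x \<in> K" "y \<in> K" "norm (y - x) \<le> \<delta>" for x y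
    using local[OF that] that(3) \<open>0 \<le> L\<close> by (blast intro: intrinsic_dist_le_mono mult_left_mono)
  have finite: "\<exists>M. intrinsic_dist_le K x y M" if "x \<in> K" "y \<in> K" for x y
    using connected_imp_intrinsic_dist_finite[OF assms(2,3) _ that] local by (meson less_imp_le)
  obtain T where "T \<subseteq> K" "finite T" and cover: "K \<subseteq> (\<Union>z\<in>T. ball z \<delta>)"
    using compactE_image[OF assms(1), of K "\<lambda>z. ball z \<delta>"] \<open>\<delta> > 0\<close> by force
  have "\<forall>p\<in>T \<times> T. \<exists>m. intrinsic_dist_le K (fst p) (snd p) m"
    using finite \<open>T \<subseteq> K\<close> by auto
  then obtain M where "\<forall>p\<in>T \<times> T. intrinsic_dist_le K (fst p) (snd p) (M p)"
    by (rule bchoice[THEN exE])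
  then have M: "\<And>p. p \<in> T \<times> T \<Longrightarrow> intrinsic_dist_le K (fst p) (snd p) (M p)"
    by blast
  have "0 \<le> M p" if "p \<in> T \<times> T" for p
    using norm_le_intrinsic_dist_le[OF M[OF that]] norm_ge_zero order_trans by blast
  define B where "B = (\<Sum>p\<in>T \<times> T. M p) + 2 * (L * \<delta>)"
  have "0 \<le> B"
    unfolding B_def using \<open>0 \<le> L\<close> \<open>\<delta> > 0\<close> \<open>\<And>p. p \<in> T \<times> T \<Longrightarrow> 0 \<le> M p\<close> by (simp add: sum_nonneg)
  moreover have "intrinsic_dist_le K x y B" if xy: "x \<in> K" "y \<in> K" for x y
  proof -
    obtain t1 t2 where t: "t1 \<in> T" "t2 \<in> T" "x \<in> ball t1 \<delta>" "y \<in> ball t2 \<delta>"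
      using subsetD[OF cover xy(1)] subsetD[OF cover xy(2)] by (elim UN_E) simp
    then have "t1 \<in> K" "t2 \<in> K" "norm (t1 - x) \<le> \<delta>" "norm (y - t2) \<le> \<delta>"
      using \<open>T \<subseteq> K\<close> by (auto simp: dist_norm norm_minus_commute)
    then have "intrinsic_dist_le K x t1 (L * \<delta>)" "intrinsic_dist_le K t1 t2 (M (t1, t2))"
      "intrinsic_dist_le K t2 y (L * \<delta>)"
      using local_\<delta>[OF xy(1)] local_\<delta>[OF _ xy(2)] M[of "(t1, t2)"] t(1,2) by auto
    then have chain: "intrinsic_dist_le K x y (L * \<delta> + M (t1, t2) + L * \<delta>)"
      by (blast intro: intrinsic_dist_le_trans)
    have "M (t1, t2) \<le> (\<Sum>p\<in>T \<times> T. M p)"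
      using t(1,2) \<open>finite T\<close> \<open>\<And>p. p \<in> T \<times> T \<Longrightarrow> 0 \<le> M p\<close>
      by (intro member_le_sum) auto
    then show ?thesis
      unfolding B_def by (intro intrinsic_dist_le_mono[OF chain]) simp
  qed
  ultimately show ?thesis using that by blast
qed

lemma whitney_regularI_intrinsic:
  fixes K :: "'a::euclidean_space set"
  assumes "compact K" "C > 0" "\<And>x y. x \<in> K \<Longrightarrow> y \<in> K \<Longrightarrow> intrinsic_dist_le K x y (C * norm (x - y))"
  shows "whitney_regular K"
proof -
  have "\<exists>a b \<gamma>. rectifiable_path_in K a b \<gamma> \<and> \<gamma> a = x \<and> \<gamma> b = y \<and> path_length_on a b \<gamma> \<le> C * norm (x - y)"
    if xy: "x \<in> K" "y \<in> K" for x y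
  proof -
    obtain \<gamma> :: "real \<Rightarrow> 'a" where \<gamma>: "(C * norm (x - y))-lipschitz_on {0..1} \<gamma>"
      "\<gamma> ` {0..1} \<subseteq> K" "\<gamma> 0 = x" "\<gamma> 1 = y"
      by (rule intrinsic_dist_le_imp_lipschitz_path[OF assms(1) assms(3)[OF xy]])
    have "continuous_on {0..1} \<gamma>"
      using \<gamma>(1) by (rule lipschitz_on_continuous_on)
    then have "rectifiable_path_in K 0 1 \<gamma>"
      unfolding rectifiable_path_in_def using \<gamma>(2) lipschitz_path_length_on_le(1)[OF \<gamma>(1)] by simp
    moreover have "path_length_on 0 1 \<gamma> \<le> C * norm (x - y)"
      using lipschitz_path_length_on_le(2)[OF \<gamma>(1)] by simp
    ultimately show ?thesis
      using \<gamma>(3,4) by blast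
  qed
  with assms(2) show ?thesis
    unfolding whitney_regular_def by blast
qed

lemma intrinsic_dist_le_linear:
  assumes "\<delta> > 0" "0 \<le> L" "0 \<le> B" "x \<in> K" "y \<in> K"
    and local: "norm (y - x) \<le> \<delta> \<Longrightarrow> intrinsic_dist_le K x y (L * norm (y - x))"
    and global: "intrinsic_dist_le K x y B"
  shows "intrinsic_dist_le K x y ((L + B / \<delta> + 1) * norm (x - y))"
proof (cases "norm (y - x) \<le> \<delta>")
  case True
  show ?thesis
    using local[OF True] by (rule intrinsic_dist_le_mono)
      (use assms(1,3) in \<open>simp add: norm_minus_commute distrib_right\<close>)
next
  case False
  then have "B \<le> B / \<delta> * norm (x - y)"
    using assms(1,3) by (simp add: field_simps mult_left_mono norm_minus_commute)
  moreover have "0 \<le> L * norm (x - y)"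
    using assms(2) by simp
  moreover have "(L + B / \<delta> + 1) * norm (x - y) = L * norm (x - y) + B / \<delta> * norm (x - y) + norm (x - y)"
    by (simp add: distrib_right)
  ultimately have "B \<le> (L + B / \<delta> + 1) * norm (x - y)"
    using norm_ge_zero[of "x - y"] by linarith
  with global show ?thesis
    by (rule intrinsic_dist_le_mono)
qed

lemma C1_Lipschitz_imp_whitney_regular:
  fixes K :: "'a::euclidean_space set"
  assumes "compact K" "connected K" "C > 0"
    and hyp: "\<And>f x y. f \<in> C1 K \<Longrightarrow> x \<in> K \<Longrightarrow> y \<in> K \<Longrightarrow> x \<noteq> y \<Longrightarrow>
      \<bar>f y - f x\<bar> / norm (y - x) \<le> C * C1_norm K f"
  shows "whitney_regular K"
proof -
  define L where "L = C * (2 * C1_smoothing_bound TYPE('a) + 1)"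
  define \<delta> where "\<delta> = 1 / (2 * C)"
  have "0 \<le> L" "\<delta> > 0"
    using \<open>C > 0\<close> by (simp_all add: L_def \<delta>_def C1_smoothing_bound_def)
  have local: "intrinsic_dist_le K x y (L * norm (y - x))" if "x \<in> K" "y \<in> K" "norm (y - x) \<le> \<delta>" for x y
  proof -
    have "2 * C * norm (y - x) \<le> 1"
      using that(3) \<open>C > 0\<close> unfolding \<delta>_def by (simp add: field_simps)
    from intrinsic_dist_le_of_C1_Lipschitz[OF assms(1,3) hyp that(1,2) this]
    show ?thesis
      unfolding L_def .
  qed
  obtain B where "0 \<le> B" and B: "\<And>x y. x \<in> K \<Longrightarrow> y \<in> K \<Longrightarrow> intrinsic_dist_le K x y B"
    using intrinsic_dist_uniformly_bounded[OF assms(1,2) \<open>\<delta> > 0\<close> \<open>0 \<le> L\<close> local] by blast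
  have "0 \<le> B / \<delta>"
    using \<open>0 \<le> B\<close> \<open>\<delta> > 0\<close> by simp
  then have "L + B / \<delta> + 1 > 0"
    using \<open>0 \<le> L\<close> by linarith
  moreover have "intrinsic_dist_le K x y ((L + B / \<delta> + 1) * norm (x - y))" if "x \<in> K" "y \<in> K" for x y
    using intrinsic_dist_le_linear[OF \<open>\<delta> > 0\<close> \<open>0 \<le> L\<close> \<open>0 \<le> B\<close> that local[OF that] B[OF that]] .
  ultimately show ?thesis
    by (rule whitney_regularI_intrinsic[OF assms(1)])
qed

theorem mainTheorem9:
  fixes K :: "'a::euclidean_space set"
  assumes "compact K" and "connected K"
  shows "(\<exists>C>0. \<forall>f\<in>C1 K. \<forall>x\<in>K. \<forall>y\<in>K. x \<noteq> y \<longrightarrow>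
            \<bar>f y - f x\<bar> / norm (y - x) \<le> C * C1_norm K f)
         \<longleftrightarrow> whitney_regular K"
proof
  assume "\<exists>C>0. \<forall>f\<in>C1 K. \<forall>x\<in>K. \<forall>y\<in>K. x \<noteq> y \<longrightarrow>
    \<bar>f y - f x\<bar> / norm (y - x) \<le> C * C1_norm K f"
  then obtain C where "C > 0" and "\<forall>f\<in>C1 K. \<forall>x\<in>K. \<forall>y\<in>K. x \<noteq> y \<longrightarrow>
    \<bar>f y - f x\<bar> / norm (y - x) \<le> C * C1_norm K f"
    by blast
  then show "whitney_regular K"
    by (intro C1_Lipschitz_imp_whitney_regular[OF assms \<open>C > 0\<close>]) blast
next
  assume "whitney_regular K"
  then obtain C where "C > 0" "\<And>f x y. f \<in> C1 K \<Longrightarrow> x \<in> K \<Longrightarrow> y \<in> K \<Longrightarrow> x \<noteq> y \<Longrightarrow>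
    \<bar>f y - f x\<bar> / norm (y - x) \<le> C * C1_norm K f"
    using whitney_regular_imp_C1_Lipschitz[OF assms(1)] by blast
  then show "\<exists>C>0. \<forall>f\<in>C1 K. \<forall>x\<in>K. \<forall>y\<in>K. x \<noteq> y \<longrightarrow>
    \<bar>f y - f x\<bar> / norm (y - x) \<le> C * C1_norm K f"
    by blast
qed

end
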